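(* Let $(X,\Sigma,\mu)$ be a complete $\sigma$-finite measure space, $\mathcal{A}\subseteq\Sigma$ a sub-$\sigma$-finite algebra, $E=E^{\mathcal{A}}$ the associated conditional expectation, and $u,w\in\mathcal{D}(E)$ such that $T=M_wEM_u$ is a bounded operator on $L^2(\Sigma)$. Then the spectral radius of $T$ is $r(T)=\|E(uw)\|_\infty$.
   Context: For a sub-$\sigma$-finite algebra $\mathcal{A}\subseteq\Sigma$, $E=E^{\mathcal{A}}$ denotes the conditional expectation: for $f\geq 0$ measurable or $f\in L^2(\Sigma)$, $Ef$ is the unique $\mathcal{A}$-measurable function with $\int_A f\,d\mu=\int_A Ef\,d\mu$ for all $A\in\mathcal{A}$. $\mathcal{D}(E)=\{g\in L^0(\Sigma): E(|g|)\in L^0(\mathcal{A})\}$, where $L^0$ denotes a.e. finite measurable functions. $M_w$ is multiplication by $w$, so $M_wEM_u f=wE(uf)$. $r(T)=\sup\{|\lambda|:\lambda\in\sigma(T)\}$. *)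

theory Defs
  imports "HOL-Probability.Probability"
begin

definition cond_exp_c :: "'a measure \<Rightarrow> 'a measure \<Rightarrow> ('a \<Rightarrow> complex) \<Rightarrow> 'a \<Rightarrow> complex" where
  "cond_exp_c M F f = (\<lambda>x. complex_of_real (real_cond_exp M F (\<lambda>y. Re (f y)) x)
      + \<i> * complex_of_real (real_cond_exp M F (\<lambda>y. Im (f y)) x))"

definition cond_exp_domain :: "'a measure \<Rightarrow> 'a measure \<Rightarrow> ('a \<Rightarrow> complex) \<Rightarrow> bool" where
  "cond_exp_domain M F g \<longleftrightarrow> g \<in> borel_measurable M \<and>
     (AE x in M. nn_cond_exp M F (\<lambda>y. ennreal (cmod (g y))) x \<noteq> \<infinity>)"

definition L2 :: "'a measure \<Rightarrow> ('a \<Rightarrow> complex) set" where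
  "L2 M = {f \<in> borel_measurable M. integrable M (\<lambda>x. (cmod (f x))\<^sup>2)}"

definition L2_norm :: "'a measure \<Rightarrow> ('a \<Rightarrow> complex) \<Rightarrow> real" where
  "L2_norm M f = sqrt (\<integral>x. (cmod (f x))\<^sup>2 \<partial>M)"

definition wce_op :: "'a measure \<Rightarrow> 'a measure \<Rightarrow> ('a \<Rightarrow> complex) \<Rightarrow> ('a \<Rightarrow> complex)
    \<Rightarrow> ('a \<Rightarrow> complex) \<Rightarrow> 'a \<Rightarrow> complex" where
  "wce_op M F w u f = (\<lambda>x. w x * cond_exp_c M F (\<lambda>y. u y * f y) x)"

definition bounded_on_L2 :: "'a measure \<Rightarrow> (('a \<Rightarrow> complex) \<Rightarrow> 'a \<Rightarrow> complex) \<Rightarrow> bool" where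
  "bounded_on_L2 M S \<longleftrightarrow> (\<forall>f\<in>L2 M. S f \<in> L2 M) \<and>
     (\<exists>C. \<forall>f\<in>L2 M. L2_norm M (S f) \<le> C * L2_norm M f)"

text \<open>Spectrum of S on L^2(M) (functions identified a.e.): lambda is in the spectrum iff
  S - lambda I is not bijective on L^2 classes (bounded inverse is automatic for bounded S).\<close>
definition L2_spectrum :: "'a measure \<Rightarrow> (('a \<Rightarrow> complex) \<Rightarrow> 'a \<Rightarrow> complex) \<Rightarrow> complex set" where
  "L2_spectrum M S = {l. \<not> ((\<forall>g\<in>L2 M. \<exists>f\<in>L2 M. AE x in M. S f x - l * f x = g x) \<and>
      (\<forall>f\<in>L2 M. (AE x in M. S f x - l * f x = 0) \<longrightarrow> (AE x in M. f x = 0)))}"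

definition L2_spectral_radius :: "'a measure \<Rightarrow> (('a \<Rightarrow> complex) \<Rightarrow> 'a \<Rightarrow> complex) \<Rightarrow> ereal" where
  "L2_spectral_radius M S = (SUP l\<in>L2_spectrum M S. ereal (cmod l))"

end

theory Submission
  imports Defs
begin

text \<open>Write \<open>W = E(|w|\<^sup>2)\<close> and \<open>\<phi> = E(u w)\<close>. Boundedness of \<open>T = M\<^sub>w E M\<^sub>u\<close> forces
  \<open>E(|u g|) < \<infinity>\<close> on \<open>{W > 0}\<close> for every \<open>g \<in> L\<^sup>2\<close>, and \<open>u = 0\<close> where \<open>W = \<infinity>\<close>; since
  also \<open>w = 0\<close> where \<open>W = 0\<close>, \<open>T\<close> is linear, its range consists of functions \<open>w k\<close> with
  \<open>k\<close> \<open>F\<close>-measurable, and on these it acts as multiplication by \<open>\<phi>\<close>. So \<open>(T - l) f = g\<close>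
  is solved explicitly, \<open>f = (w E(u g)/(\<phi> - l) - g)/l\<close>, whenever \<open>l \<noteq> 0\<close> stays away from the
  essential range of \<open>\<phi>\<close>; hence \<open>r(T) \<le> \<parallel>\<phi>\<parallel>\<^sub>\<infinity>\<close>. Conversely a nonzero essential value \<open>l\<close>
  of \<open>\<phi>\<close> is either an eigenvalue or \<open>T - l\<close> misses some \<open>w k \<in> L\<^sup>2\<close> with
  \<open>w k/(\<phi> - l) \<notin> L\<^sup>2\<close>, built from dyadic shells of \<open>|\<phi> - l|\<close>; and if \<open>\<phi> = 0\<close> a.e.
  then \<open>T\<^sup>2 = 0\<close>, so \<open>0\<close> is in the spectrum.\<close>

section \<open>Conditional expectation of non-integrable functions\<close>

lemma enn2real_ennreal_eq_max_0: "enn2real (ennreal a) = max 0 a"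
  by (cases "a \<ge> 0") (auto simp: ennreal_neg max_def)

lemma ennreal_plus_max_0: "ennreal (max 0 a + max 0 b) = ennreal a + ennreal b"
  by (subst ennreal_plus) (auto simp: ennreal_max_0)

lemma ennreal_mult_max_0: "ennreal (max 0 a * max 0 b) = ennreal a * ennreal b"
  by (subst ennreal_mult) (auto simp: ennreal_max_0)

lemma enn2real_signed_mult:
  fixes a b :: ennreal
  assumes "a \<noteq> \<infinity>" "b \<noteq> \<infinity>"
  shows "enn2real (ennreal k * a + ennreal (- k) * b) - enn2real (ennreal k * b + ennreal (- k) * a)
       = k * (enn2real a - enn2real b)"
proof -
  have "enn2real (ennreal k * a + ennreal (- k) * b) - enn2real (ennreal k * b + ennreal (- k) * a)
      = (max 0 k * enn2real a + max 0 (-k) * enn2real b) - (max 0 k * enn2real b + max 0 (-k) * enn2real a)"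
    using assms by (simp add: enn2real_plus enn2real_mult ennreal_mult_eq_top_iff
                              less_top[symmetric] enn2real_ennreal_eq_max_0)
  also have "\<dots> = (max 0 k - max 0 (-k)) * (enn2real a - enn2real b)" by algebra
  also have "max 0 k - max 0 (-k) = k" by (auto simp: max_def)
  finally show ?thesis .
qed

definition real_cond_exp_domain :: "'a measure \<Rightarrow> 'a measure \<Rightarrow> ('a \<Rightarrow> real) \<Rightarrow> bool" where
  "real_cond_exp_domain M F f \<longleftrightarrow>
     f \<in> borel_measurable M \<and> (AE x in M. nn_cond_exp M F (\<lambda>x. ennreal \<bar>f x\<bar>) x \<noteq> \<infinity>)"

lemma borel_measurable_cnj [measurable]:
  "f \<in> borel_measurable M \<Longrightarrow> (\<lambda>x. cnj (f x)) \<in> borel_measurable M"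
  by (rule borel_measurable_continuous_on[of cnj]) (auto intro: continuous_intros)

lemma borel_measurable_cond_exp_c [measurable]: "cond_exp_c M F f \<in> borel_measurable F"
  unfolding cond_exp_c_def by measurable

context sigma_finite_subalgebra
begin

lemma space_subalg: "space F = space M"
  using subalg by (simp add: subalgebra_def)

lemma sets_subalg: "A \<in> sets F \<Longrightarrow> A \<in> sets M"
  using subalg by (auto simp: subalgebra_def)

lemma borel_measurable_subalg: "f \<in> borel_measurable F \<Longrightarrow> f \<in> borel_measurable M"
  by (rule measurable_from_subalg[OF subalg])

lemma pred_sets_subalg:
  assumes [measurable]: "f \<in> borel_measurable F" "Measurable.pred borel P"
  shows "{x \<in> space M. P (f x)} \<in> sets F"
proof -
  have "{x \<in> space F. P (f x)} \<in> sets F" by measurable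
  then show ?thesis by (simp add: space_subalg)
qed

lemma cond_exp_c_measurable_M [measurable]: "cond_exp_c M F f \<in> borel_measurable M"
  by (rule borel_measurable_subalg) measurable

lemma nn_cond_exp_const: "AE x in M. nn_cond_exp M F (\<lambda>_. c) x = c"
  using nn_cond_exp_F_meas[of "\<lambda>_. c"] by auto

lemma nn_cond_exp_finite_mono:
  assumes [measurable]: "f \<in> borel_measurable M" "g \<in> borel_measurable M"
    and "AE x in M. f x \<le> g x" "AE x in M. nn_cond_exp M F g x \<noteq> \<infinity>"
  shows "AE x in M. nn_cond_exp M F f x \<noteq> \<infinity>"
proof -
  have "AE x in M. nn_cond_exp M F f x \<le> nn_cond_exp M F g x"
    by (rule nn_cond_exp_mono) (use assms in auto)
  then show ?thesis using assms(4) by eventually_elim (auto simp: top_unique)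
qed

lemma nn_cond_exp_finite_mult:
  assumes [measurable]: "k \<in> borel_measurable F" "g \<in> borel_measurable M"
    and "AE x in M. nn_cond_exp M F g x \<noteq> \<infinity>" "\<And>x. k x \<noteq> \<infinity>"
  shows "AE x in M. nn_cond_exp M F (\<lambda>x. k x * g x) x \<noteq> \<infinity>"
proof -
  have "AE x in M. k x * nn_cond_exp M F g x = nn_cond_exp M F (\<lambda>x. k x * g x) x"
    by (rule nn_cond_exp_prod) auto
  then show ?thesis using assms(3) by eventually_elim (use assms(4) in \<open>auto simp: ennreal_mult_eq_top_iff\<close>)
qed

lemma nn_cond_exp_eq_0_imp:
  assumes [measurable]: "g \<in> borel_measurable M"
  shows "AE x in M. nn_cond_exp M F g x = 0 \<longrightarrow> g x = 0"
proof -
  define A where "A = {x \<in> space M. nn_cond_exp M F g x = 0}"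
  have [measurable]: "A \<in> sets F" unfolding A_def by (rule pred_sets_subalg) auto
  then have [measurable]: "A \<in> sets M" by (rule sets_subalg)
  have "(\<integral>\<^sup>+ x. indicator A x * g x \<partial>M) = (\<integral>\<^sup>+ x. indicator A x * nn_cond_exp M F g x \<partial>M)"
    by (rule nn_cond_exp_intg[symmetric]) auto
  also have "\<dots> = 0" by (rule nn_integral_0_iff_AE[THEN iffD2]) (auto simp: A_def indicator_def)
  finally have "AE x in M. indicator A x * g x = 0" by (subst (asm) nn_integral_0_iff_AE) auto
  then show ?thesis using AE_space by eventually_elim (auto simp: A_def indicator_def)
qed

lemma nn_cond_exp_eq_0_on:
  assumes [measurable]: "g \<in> borel_measurable M" "A \<in> sets F" and "AE x in M. x \<in> A \<longrightarrow> g x = 0"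
  shows "AE x in M. x \<in> A \<longrightarrow> nn_cond_exp M F g x = 0"
proof -
  have [measurable]: "A \<in> sets M" by (rule sets_subalg) fact
  have "AE x in M. indicator A x * nn_cond_exp M F g x = nn_cond_exp M F (\<lambda>x. indicator A x * g x) x"
    by (rule nn_cond_exp_prod) auto
  moreover have "AE x in M. nn_cond_exp M F (\<lambda>x. indicator A x * g x) x = nn_cond_exp M F (\<lambda>x. 0) x"
    by (rule nn_cond_exp_cong) (use assms(3) in \<open>auto simp: indicator_def\<close>)
  ultimately show ?thesis using nn_cond_exp_const[of 0] by eventually_elim (auto simp: indicator_def)
qed

lemma nn_cond_exp_SUP:
  assumes [measurable]: "\<And>n. f n \<in> borel_measurable M" and inc: "\<And>x. incseq (\<lambda>n. f n x)"
  shows "AE x in M. nn_cond_exp M F (\<lambda>x. SUP n. f n x) x = (SUP n. nn_cond_exp M F (f n) x)"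
proof -
  have "AE x in M. (SUP n. nn_cond_exp M F (f n) x) = nn_cond_exp M F (\<lambda>x. SUP n. f n x) x"
  proof (rule nn_cond_exp_charact)
    fix A assume [measurable]: "A \<in> sets F"
    then have [measurable]: "A \<in> sets M" by (rule sets_subalg)
    have "(\<integral>\<^sup>+ x \<in> A. (SUP n. f n x) \<partial>M) = (\<integral>\<^sup>+ x. (SUP n. indicator A x * f n x) \<partial>M)"
      by (auto intro!: nn_integral_cong simp: SUP_mult_left_ennreal mult.commute)
    also have "\<dots> = (SUP n. \<integral>\<^sup>+ x. indicator A x * f n x \<partial>M)"
      by (rule nn_integral_monotone_convergence_SUP)
        (use inc in \<open>auto simp: incseq_def le_fun_def intro!: mult_left_mono\<close>)
    also have "\<dots> = (SUP n. \<integral>\<^sup>+ x. indicator A x * nn_cond_exp M F (f n) x \<partial>M)"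
      by (auto intro!: SUP_cong nn_cond_exp_intg[symmetric])
    also have "\<dots> = (\<integral>\<^sup>+ x. (SUP n. indicator A x * nn_cond_exp M F (f n) x) \<partial>M)"
    proof (rule nn_integral_monotone_convergence_SUP_AE[symmetric])
      fix n
      have "AE x in M. nn_cond_exp M F (f n) x \<le> nn_cond_exp M F (f (Suc n)) x"
        by (rule nn_cond_exp_mono) (use inc in \<open>auto simp: incseq_Suc_iff\<close>)
      then show "AE x in M. indicator A x * nn_cond_exp M F (f n) x
                             \<le> indicator A x * nn_cond_exp M F (f (Suc n)) x"
        by eventually_elim (auto intro!: mult_left_mono)
    qed auto
    also have "\<dots> = (\<integral>\<^sup>+ x \<in> A. (SUP n. nn_cond_exp M F (f n) x) \<partial>M)"
      by (auto intro!: nn_integral_cong simp: SUP_mult_left_ennreal mult.commute)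
    finally show "(\<integral>\<^sup>+ x \<in> A. (SUP n. f n x) \<partial>M) = (\<integral>\<^sup>+ x \<in> A. (SUP n. nn_cond_exp M F (f n) x) \<partial>M)" .
  qed auto
  then show ?thesis by eventually_elim simp
qed

lemma nn_cond_exp_truncation:
  fixes p a :: "'a \<Rightarrow> real"
  assumes [measurable]: "p \<in> borel_measurable M" "a \<in> borel_measurable M"
    and nonneg: "\<And>x. 0 \<le> p x" "\<And>x. 0 \<le> a x"
  obtains a' :: "nat \<Rightarrow> 'a \<Rightarrow> real"
  where "\<And>n. a' n \<in> borel_measurable M" "\<And>n x. 0 \<le> a' n x" "\<And>n x. a' n x \<le> a x"
    "AE x in M. \<forall>n. nn_cond_exp M F (\<lambda>x. ennreal (p x * a' n x)) x \<noteq> \<infinity>"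
    "AE x in M. incseq (\<lambda>n. nn_cond_exp M F (\<lambda>x. ennreal (p x * a' n x)) x)"
    "AE x in M. nn_cond_exp M F (\<lambda>x. ennreal (p x * a x)) x
              = (SUP n. nn_cond_exp M F (\<lambda>x. ennreal (p x * a' n x)) x)"
proof -
  define a' where "a' n x = (if p x * a x \<le> real n then a x else 0)" for n x
  have [measurable]: "a' n \<in> borel_measurable M" for n unfolding a'_def by measurable
  have a'_le: "0 \<le> a' n x" "a' n x \<le> a x" "a' n x \<le> a' (Suc n) x" for n x
    using nonneg(2)[of x] by (auto simp: a'_def)
  have "AE x in M. \<forall>n. nn_cond_exp M F (\<lambda>x. ennreal (p x * a' n x)) x \<noteq> \<infinity>"
    unfolding AE_all_countable
  proof
    fix n
    have "AE x in M. nn_cond_exp M F (\<lambda>x. ennreal (p x * a' n x)) x \<le> nn_cond_exp M F (\<lambda>x. ennreal (real n)) x"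
      by (rule nn_cond_exp_mono) (auto simp: a'_def intro!: ennreal_leI)
    then show "AE x in M. nn_cond_exp M F (\<lambda>x. ennreal (p x * a' n x)) x \<noteq> \<infinity>"
      using nn_cond_exp_const[of "ennreal (real n)"] by eventually_elim (auto simp: top_unique)
  qed
  moreover have "AE x in M. incseq (\<lambda>n. nn_cond_exp M F (\<lambda>x. ennreal (p x * a' n x)) x)"
  proof -
    have "AE x in M. \<forall>n. nn_cond_exp M F (\<lambda>x. ennreal (p x * a' n x)) x
                         \<le> nn_cond_exp M F (\<lambda>x. ennreal (p x * a' (Suc n) x)) x"
      unfolding AE_all_countable
      by (intro allI nn_cond_exp_mono) (auto intro!: ennreal_leI mult_left_mono a'_le nonneg)
    then show ?thesis by eventually_elim (simp add: incseq_Suc_iff)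
  qed
  moreover have "AE x in M. nn_cond_exp M F (\<lambda>x. ennreal (p x * a x)) x
                          = (SUP n. nn_cond_exp M F (\<lambda>x. ennreal (p x * a' n x)) x)"
  proof -
    have "(SUP n. ennreal (p x * a' n x)) = ennreal (p x * a x)" for x
    proof (rule antisym)
      obtain n :: nat where "p x * a x \<le> real n" using real_arch_simple by blast
      then show "ennreal (p x * a x) \<le> (SUP n. ennreal (p x * a' n x))"
        by (intro SUP_upper2[of n]) (auto simp: a'_def)
    qed (auto intro!: SUP_least ennreal_leI mult_left_mono a'_le nonneg)
    moreover have "incseq (\<lambda>n. ennreal (p x * a' n x))" for x
      by (intro incseq_SucI ennreal_leI mult_left_mono a'_le nonneg)
    ultimately show ?thesis
      using nn_cond_exp_SUP[of "\<lambda>n x. ennreal (p x * a' n x)"] by simp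
  qed
  ultimately show ?thesis using that[of a'] a'_le by auto
qed

text \<open>The library's \<^const>\<open>real_cond_exp\<close> is \<open>E(f\<^sup>+) - E(f\<^sup>-)\<close>; any other splitting
  \<open>f = p - q\<close> into parts with finite conditional expectation gives the same value.\<close>
lemma real_cond_exp_eq_diff:
  assumes [measurable]: "f \<in> borel_measurable M" "p \<in> borel_measurable M" "q \<in> borel_measurable M"
    and nonneg: "\<And>x. p x \<ge> 0" "\<And>x. q x \<ge> 0"
    and diff: "\<And>x. f x = p x - q x"
    and fin: "AE x in M. nn_cond_exp M F (\<lambda>x. ennreal (p x)) x \<noteq> \<infinity>"
             "AE x in M. nn_cond_exp M F (\<lambda>x. ennreal (q x)) x \<noteq> \<infinity>"
  shows "AE x in M. real_cond_exp M F f x =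
     enn2real (nn_cond_exp M F (\<lambda>x. ennreal (p x)) x) - enn2real (nn_cond_exp M F (\<lambda>x. ennreal (q x)) x)"
proof -
  let ?N = "nn_cond_exp M F"
  have split: "ennreal (f x) + ennreal (q x) = ennreal (-f x) + ennreal (p x)" for x
    using diff[of x] nonneg[of x] by (cases "f x \<ge> 0") (auto simp: ennreal_neg ennreal_plus[symmetric])
  have "AE x in M. ?N (\<lambda>x. ennreal (f x)) x + ?N (\<lambda>x. ennreal (q x)) x
                 = ?N (\<lambda>x. ennreal (-f x)) x + ?N (\<lambda>x. ennreal (p x)) x"
  proof -
    have "AE x in M. ?N (\<lambda>x. ennreal (f x)) x + ?N (\<lambda>x. ennreal (q x)) x = ?N (\<lambda>x. ennreal (f x) + ennreal (q x)) x"
      by (rule nn_cond_exp_sum) auto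
    moreover have "AE x in M. ?N (\<lambda>x. ennreal (-f x)) x + ?N (\<lambda>x. ennreal (p x)) x = ?N (\<lambda>x. ennreal (-f x) + ennreal (p x)) x"
      by (rule nn_cond_exp_sum) auto
    ultimately show ?thesis unfolding split by eventually_elim simp
  qed
  moreover have "AE x in M. ?N (\<lambda>x. ennreal (f x)) x \<noteq> \<infinity>"
    by (rule nn_cond_exp_finite_mono[OF _ _ _ fin(1)]) (use diff nonneg in \<open>auto intro!: ennreal_leI\<close>)
  moreover have "AE x in M. ?N (\<lambda>x. ennreal (-f x)) x \<noteq> \<infinity>"
    by (rule nn_cond_exp_finite_mono[OF _ _ _ fin(2)]) (use diff nonneg in \<open>auto intro!: ennreal_leI\<close>)
  ultimately show ?thesis using fin unfolding real_cond_exp_def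
  proof eventually_elim
    case (elim x)
    define a b P Q where "a = ?N (\<lambda>x. ennreal (f x)) x" and "b = ?N (\<lambda>x. ennreal (-f x)) x"
      and "P = ?N (\<lambda>x. ennreal (p x)) x" and "Q = ?N (\<lambda>x. ennreal (q x)) x"
    have fin: "a \<noteq> \<infinity>" "b \<noteq> \<infinity>" "P \<noteq> \<infinity>" "Q \<noteq> \<infinity>"
      using elim unfolding a_def b_def P_def Q_def by auto
    have "enn2real (a + Q) = enn2real (b + P)" using elim(1) unfolding a_def b_def P_def Q_def by simp
    then have "enn2real a + enn2real Q = enn2real b + enn2real P"
      using fin by (simp add: enn2real_plus less_top)
    then show ?case unfolding a_def b_def P_def Q_def by linarith
  qed
qed

lemma real_cond_exp_domain_pos_neg:
  assumes "real_cond_exp_domain M F f"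
  shows "AE x in M. nn_cond_exp M F (\<lambda>x. ennreal (f x)) x \<noteq> \<infinity>"
        "AE x in M. nn_cond_exp M F (\<lambda>x. ennreal (- f x)) x \<noteq> \<infinity>"
proof -
  have [measurable]: "f \<in> borel_measurable M"
    and fin: "AE x in M. nn_cond_exp M F (\<lambda>x. ennreal \<bar>f x\<bar>) x \<noteq> \<infinity>"
    using assms by (auto simp: real_cond_exp_domain_def)
  show "AE x in M. nn_cond_exp M F (\<lambda>x. ennreal (f x)) x \<noteq> \<infinity>"
    by (rule nn_cond_exp_finite_mono[OF _ _ _ fin]) (auto intro!: ennreal_leI)
  show "AE x in M. nn_cond_exp M F (\<lambda>x. ennreal (- f x)) x \<noteq> \<infinity>"
    by (rule nn_cond_exp_finite_mono[OF _ _ _ fin]) (auto intro!: ennreal_leI)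
qed

lemma real_cond_exp_domain_mult:
  assumes "real_cond_exp_domain M F f" and [measurable]: "k \<in> borel_measurable F"
  shows "real_cond_exp_domain M F (\<lambda>x. k x * f x)"
proof -
  have [measurable]: "f \<in> borel_measurable M" "k \<in> borel_measurable M"
    using assms borel_measurable_subalg[OF assms(2)] by (auto simp: real_cond_exp_domain_def)
  have "AE x in M. nn_cond_exp M F (\<lambda>x. ennreal \<bar>k x\<bar> * ennreal \<bar>f x\<bar>) x \<noteq> \<infinity>"
    by (rule nn_cond_exp_finite_mult) (use assms in \<open>auto simp: real_cond_exp_domain_def\<close>)
  then show ?thesis by (simp add: real_cond_exp_domain_def abs_mult ennreal_mult)
qed

lemma real_cond_exp_add_AE:
  assumes "real_cond_exp_domain M F f" "real_cond_exp_domain M F g"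
  shows "AE x in M. real_cond_exp M F (\<lambda>x. f x + g x) x = real_cond_exp M F f x + real_cond_exp M F g x"
proof -
  let ?N = "nn_cond_exp M F"
  have [measurable]: "f \<in> borel_measurable M" "g \<in> borel_measurable M"
    using assms by (auto simp: real_cond_exp_domain_def)
  note fin = real_cond_exp_domain_pos_neg[OF assms(1)] real_cond_exp_domain_pos_neg[OF assms(2)]
  have pos: "AE x in M. ?N (\<lambda>x. ennreal (f x)) x + ?N (\<lambda>x. ennreal (g x)) x
                      = ?N (\<lambda>x. ennreal (max 0 (f x) + max 0 (g x))) x"
    unfolding ennreal_plus_max_0 by (rule nn_cond_exp_sum) auto
  have neg: "AE x in M. ?N (\<lambda>x. ennreal (-f x)) x + ?N (\<lambda>x. ennreal (-g x)) x
                      = ?N (\<lambda>x. ennreal (max 0 (-f x) + max 0 (-g x))) x"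
    unfolding ennreal_plus_max_0 by (rule nn_cond_exp_sum) auto
  have "AE x in M. real_cond_exp M F (\<lambda>x. f x + g x) x =
     enn2real (?N (\<lambda>x. ennreal (max 0 (f x) + max 0 (g x))) x)
     - enn2real (?N (\<lambda>x. ennreal (max 0 (-f x) + max 0 (-g x))) x)"
  proof (rule real_cond_exp_eq_diff)
    show "AE x in M. ?N (\<lambda>x. ennreal (max 0 (f x) + max 0 (g x))) x \<noteq> \<infinity>"
      using pos fin by eventually_elim (metis ennreal_add_eq_top infinity_ennreal_def)
    show "AE x in M. ?N (\<lambda>x. ennreal (max 0 (-f x) + max 0 (-g x))) x \<noteq> \<infinity>"
      using neg fin by eventually_elim (metis ennreal_add_eq_top infinity_ennreal_def)
  qed auto
  then show ?thesis using pos neg fin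
  proof eventually_elim
    case (elim x)
    define a b c d where "a = ?N (\<lambda>x. ennreal (f x)) x" and "b = ?N (\<lambda>x. ennreal (g x)) x"
      and "c = ?N (\<lambda>x. ennreal (-f x)) x" and "d = ?N (\<lambda>x. ennreal (-g x)) x"
    have fin: "a \<noteq> \<infinity>" "b \<noteq> \<infinity>" "c \<noteq> \<infinity>" "d \<noteq> \<infinity>"
      using elim(4-7) unfolding a_def b_def c_def d_def by auto
    have "real_cond_exp M F (\<lambda>x. f x + g x) x = enn2real (a + b) - enn2real (c + d)"
      using elim(1-3) unfolding a_def b_def c_def d_def by simp
    also have "\<dots> = (enn2real a - enn2real c) + (enn2real b - enn2real d)"
      using fin by (simp add: enn2real_plus less_top[symmetric])
    finally show ?case unfolding real_cond_exp_def a_def b_def c_def d_def .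
  qed
qed

lemma real_cond_exp_mult_AE:
  assumes "real_cond_exp_domain M F f" and [measurable]: "k \<in> borel_measurable F"
  shows "AE x in M. real_cond_exp M F (\<lambda>x. k x * f x) x = k x * real_cond_exp M F f x"
proof -
  let ?N = "nn_cond_exp M F"
  let ?fp = "\<lambda>x. ennreal (f x)" and ?fn = "\<lambda>x. ennreal (- f x)"
  have [measurable]: "f \<in> borel_measurable M" "k \<in> borel_measurable M"
    using assms borel_measurable_subalg[OF assms(2)] by (auto simp: real_cond_exp_domain_def)
  note fin = real_cond_exp_domain_pos_neg[OF assms(1)]
  have prod: "AE x in M. ennreal (k x) * ?N ?fp x = ?N (\<lambda>x. ennreal (k x) * ?fp x) x"
             "AE x in M. ennreal (- k x) * ?N ?fn x = ?N (\<lambda>x. ennreal (- k x) * ?fn x) x"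
             "AE x in M. ennreal (k x) * ?N ?fn x = ?N (\<lambda>x. ennreal (k x) * ?fn x) x"
             "AE x in M. ennreal (- k x) * ?N ?fp x = ?N (\<lambda>x. ennreal (- k x) * ?fp x) x"
    by (rule nn_cond_exp_prod; simp)+
  define p where "p x = max 0 (k x) * max 0 (f x) + max 0 (- k x) * max 0 (- f x)" for x
  define q where "q x = max 0 (k x) * max 0 (- f x) + max 0 (- k x) * max 0 (f x)" for x
  have p: "ennreal (p x) = ennreal (k x) * ?fp x + ennreal (- k x) * ?fn x" for x
    unfolding p_def by (subst ennreal_plus) (auto simp: ennreal_mult_max_0)
  have q: "ennreal (q x) = ennreal (k x) * ?fn x + ennreal (- k x) * ?fp x" for x
    unfolding q_def by (subst ennreal_plus) (auto simp: ennreal_mult_max_0)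
  have sum_p: "AE x in M. ?N (\<lambda>x. ennreal (k x) * ?fp x) x + ?N (\<lambda>x. ennreal (- k x) * ?fn x) x
                        = ?N (\<lambda>x. ennreal (p x)) x"
    unfolding p by (rule nn_cond_exp_sum) auto
  have sum_q: "AE x in M. ?N (\<lambda>x. ennreal (k x) * ?fn x) x + ?N (\<lambda>x. ennreal (- k x) * ?fp x) x
                        = ?N (\<lambda>x. ennreal (q x)) x"
    unfolding q by (rule nn_cond_exp_sum) auto
  have "AE x in M. real_cond_exp M F (\<lambda>x. k x * f x) x
                 = enn2real (?N (\<lambda>x. ennreal (p x)) x) - enn2real (?N (\<lambda>x. ennreal (q x)) x)"
  proof (rule real_cond_exp_eq_diff)
    show "AE x in M. ?N (\<lambda>x. ennreal (p x)) x \<noteq> \<infinity>"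
      using sum_p prod fin by eventually_elim (auto simp: ennreal_mult_eq_top_iff)
    show "AE x in M. ?N (\<lambda>x. ennreal (q x)) x \<noteq> \<infinity>"
      using sum_q prod fin by eventually_elim (auto simp: ennreal_mult_eq_top_iff)
    show "\<And>x. k x * f x = p x - q x" unfolding p_def q_def by (auto simp: max_def algebra_simps)
  qed (auto simp: p_def q_def)
  then show ?thesis using sum_p sum_q prod fin
  proof eventually_elim
    case (elim x)
    have "real_cond_exp M F (\<lambda>x. k x * f x) x
        = enn2real (ennreal (k x) * ?N ?fp x + ennreal (- k x) * ?N ?fn x)
          - enn2real (ennreal (k x) * ?N ?fn x + ennreal (- k x) * ?N ?fp x)"
      using elim(1-7) by simp
    also have "\<dots> = k x * real_cond_exp M F f x"
      unfolding real_cond_exp_def using elim(8,9) by (rule enn2real_signed_mult)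
    finally show ?case .
  qed
qed

lemma real_cond_exp_nonneg_eq:
  assumes [measurable]: "h \<in> borel_measurable M" and "\<And>x. h x \<ge> 0"
  shows "AE x in M. real_cond_exp M F h x = enn2real (nn_cond_exp M F (\<lambda>x. ennreal (h x)) x)"
proof -
  have "(\<lambda>x. ennreal (- h x)) = (\<lambda>x. 0)" using assms(2) by (auto simp: ennreal_neg)
  then show ?thesis using nn_cond_exp_const[of 0] unfolding real_cond_exp_def by auto
qed

lemma real_cond_exp_zero: "AE x in M. real_cond_exp M F (\<lambda>x. 0) x = 0"
  using real_cond_exp_nonneg_eq[of "\<lambda>x. 0"] nn_cond_exp_const[of 0] by auto

lemma real_cond_exp_indicator:
  assumes [measurable]: "h \<in> borel_measurable M" "A \<in> sets F"
  shows "AE x in M. real_cond_exp M F (\<lambda>x. indicator A x * h x) x = indicator A x * real_cond_exp M F h x"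
proof -
  have eq: "(\<lambda>x. ennreal (indicator A x * h x)) = (\<lambda>x. indicator A x * ennreal (h x))"
       "(\<lambda>x. ennreal (- (indicator A x * h x))) = (\<lambda>x. indicator A x * ennreal (- h x))"
    by (auto simp: indicator_def)
  have "AE x in M. indicator A x * nn_cond_exp M F (\<lambda>x. ennreal (h x)) x
                  = nn_cond_exp M F (\<lambda>x. indicator A x * ennreal (h x)) x"
    "AE x in M. indicator A x * nn_cond_exp M F (\<lambda>x. ennreal (- h x)) x
                  = nn_cond_exp M F (\<lambda>x. indicator A x * ennreal (- h x)) x"
    by (rule nn_cond_exp_prod; simp)+
  then show ?thesis unfolding real_cond_exp_def eq
    by eventually_elim (auto simp: indicator_def)
qed

lemma cond_exp_domain_Re_Im:
  assumes "cond_exp_domain M F g"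
  shows "real_cond_exp_domain M F (\<lambda>x. Re (g x))" "real_cond_exp_domain M F (\<lambda>x. Im (g x))"
proof -
  have [measurable]: "g \<in> borel_measurable M"
    and fin: "AE x in M. nn_cond_exp M F (\<lambda>x. ennreal (cmod (g x))) x \<noteq> \<infinity>"
    using assms by (auto simp: cond_exp_domain_def)
  have "AE x in M. nn_cond_exp M F (\<lambda>x. ennreal \<bar>Re (g x)\<bar>) x \<noteq> \<infinity>"
       "AE x in M. nn_cond_exp M F (\<lambda>x. ennreal \<bar>Im (g x)\<bar>) x \<noteq> \<infinity>"
    by (rule nn_cond_exp_finite_mono[OF _ _ _ fin]; auto intro!: ennreal_leI abs_Re_le_cmod abs_Im_le_cmod)+
  then show "real_cond_exp_domain M F (\<lambda>x. Re (g x))" "real_cond_exp_domain M F (\<lambda>x. Im (g x))"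
    by (auto simp: real_cond_exp_domain_def)
qed

lemma cond_exp_c_add:
  assumes "cond_exp_domain M F f" "cond_exp_domain M F g"
  shows "AE x in M. cond_exp_c M F (\<lambda>x. f x + g x) x = cond_exp_c M F f x + cond_exp_c M F g x"
proof -
  note Re_Im = cond_exp_domain_Re_Im[OF assms(1)] cond_exp_domain_Re_Im[OF assms(2)]
  have "AE x in M. real_cond_exp M F (\<lambda>x. Re (f x) + Re (g x)) x
                 = real_cond_exp M F (\<lambda>x. Re (f x)) x + real_cond_exp M F (\<lambda>x. Re (g x)) x"
    by (rule real_cond_exp_add_AE) (use Re_Im in auto)
  moreover have "AE x in M. real_cond_exp M F (\<lambda>x. Im (f x) + Im (g x)) x
                 = real_cond_exp M F (\<lambda>x. Im (f x)) x + real_cond_exp M F (\<lambda>x. Im (g x)) x"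
    by (rule real_cond_exp_add_AE) (use Re_Im in auto)
  ultimately show ?thesis by eventually_elim (simp add: cond_exp_c_def algebra_simps)
qed

lemma cond_exp_c_mult:
  assumes "cond_exp_domain M F g" and [measurable]: "k \<in> borel_measurable F"
  shows "AE x in M. cond_exp_c M F (\<lambda>x. k x * g x) x = k x * cond_exp_c M F g x"
proof -
  note G = cond_exp_domain_Re_Im[OF assms(1)]
  let ?E = "real_cond_exp M F"
  have [measurable]: "(\<lambda>x. Re (k x)) \<in> borel_measurable F" "(\<lambda>x. Im (k x)) \<in> borel_measurable F"
    "(\<lambda>x. - Im (k x)) \<in> borel_measurable F" by auto
  have add: "AE x in M. ?E (\<lambda>x. Re (k x) * Re (g x) + (- Im (k x)) * Im (g x)) x
                 = ?E (\<lambda>x. Re (k x) * Re (g x)) x + ?E (\<lambda>x. (- Im (k x)) * Im (g x)) x"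
       "AE x in M. ?E (\<lambda>x. Re (k x) * Im (g x) + Im (k x) * Re (g x)) x
                 = ?E (\<lambda>x. Re (k x) * Im (g x)) x + ?E (\<lambda>x. Im (k x) * Re (g x)) x"
    by (rule real_cond_exp_add_AE;
        rule real_cond_exp_domain_mult[OF G(1)] real_cond_exp_domain_mult[OF G(2)]; simp)+
  have mult: "AE x in M. ?E (\<lambda>x. Re (k x) * Re (g x)) x = Re (k x) * ?E (\<lambda>x. Re (g x)) x"
    "AE x in M. ?E (\<lambda>x. (- Im (k x)) * Im (g x)) x = (- Im (k x)) * ?E (\<lambda>x. Im (g x)) x"
    "AE x in M. ?E (\<lambda>x. Re (k x) * Im (g x)) x = Re (k x) * ?E (\<lambda>x. Im (g x)) x"
    "AE x in M. ?E (\<lambda>x. Im (k x) * Re (g x)) x = Im (k x) * ?E (\<lambda>x. Re (g x)) x"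
    by (rule real_cond_exp_mult_AE; auto intro!: G)+
  have Re_Im: "(\<lambda>x. Re (k x * g x)) = (\<lambda>x. Re (k x) * Re (g x) + (- Im (k x)) * Im (g x))"
    "(\<lambda>x. Im (k x * g x)) = (\<lambda>x. Re (k x) * Im (g x) + Im (k x) * Re (g x))" by auto
  from add mult show ?thesis
  proof eventually_elim
    case (elim x)
    show ?case unfolding cond_exp_c_def Re_Im elim by (simp add: complex_eq_iff algebra_simps)
  qed
qed

lemma cond_exp_c_cong:
  assumes [measurable]: "f \<in> borel_measurable M" "g \<in> borel_measurable M" and "AE x in M. f x = g x"
  shows "AE x in M. cond_exp_c M F f x = cond_exp_c M F g x"
proof -
  have "AE x in M. real_cond_exp M F (\<lambda>x. Re (f x)) x = real_cond_exp M F (\<lambda>x. Re (g x)) x"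
    by (rule real_cond_exp_cong) (use assms(3) in auto)
  moreover have "AE x in M. real_cond_exp M F (\<lambda>x. Im (f x)) x = real_cond_exp M F (\<lambda>x. Im (g x)) x"
    by (rule real_cond_exp_cong) (use assms(3) in auto)
  ultimately show ?thesis unfolding cond_exp_c_def by eventually_elim auto
qed

lemma cond_exp_c_of_real_nonneg:
  assumes [measurable]: "h \<in> borel_measurable M" and "\<And>x. h x \<ge> 0"
  shows "AE x in M. cond_exp_c M F (\<lambda>x. complex_of_real (h x)) x
                  = complex_of_real (enn2real (nn_cond_exp M F (\<lambda>x. ennreal (h x)) x))"
  using real_cond_exp_nonneg_eq[OF assms] real_cond_exp_zero
  unfolding cond_exp_c_def by eventually_elim auto

lemma cond_exp_c_indicator:
  assumes [measurable]: "g \<in> borel_measurable M" "A \<in> sets F"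
  shows "AE x in M. cond_exp_c M F (\<lambda>x. indicator A x * g x) x = indicator A x * cond_exp_c M F g x"
proof -
  have eq: "(\<lambda>x. Re (indicator A x * g x)) = (\<lambda>x. indicator A x * Re (g x))"
       "(\<lambda>x. Im (indicator A x * g x)) = (\<lambda>x. indicator A x * Im (g x))"
    by (auto simp: indicator_def)
  have "AE x in M. real_cond_exp M F (\<lambda>x. indicator A x * Re (g x)) x
                          = indicator A x * real_cond_exp M F (\<lambda>x. Re (g x)) x"
    "AE x in M. real_cond_exp M F (\<lambda>x. indicator A x * Im (g x)) x
                          = indicator A x * real_cond_exp M F (\<lambda>x. Im (g x)) x"
    by (rule real_cond_exp_indicator; simp)+
  then show ?thesis unfolding cond_exp_c_def eq
    by eventually_elim (auto simp: indicator_def)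
qed

lemma cond_exp_c_eq_0_on:
  assumes [measurable]: "g \<in> borel_measurable M" "A \<in> sets F" and "AE x in M. x \<in> A \<longrightarrow> g x = 0"
  shows "AE x in M. x \<in> A \<longrightarrow> cond_exp_c M F g x = 0"
proof -
  have [measurable]: "A \<in> sets M" by (rule sets_subalg) fact
  have "AE x in M. cond_exp_c M F (\<lambda>x. indicator A x * g x) x = indicator A x * cond_exp_c M F g x"
    by (rule cond_exp_c_indicator) auto
  moreover have "AE x in M. cond_exp_c M F (\<lambda>x. indicator A x * g x) x = cond_exp_c M F (\<lambda>x. 0) x"
    by (rule cond_exp_c_cong) (use assms(3) in \<open>auto simp: indicator_def\<close>)
  moreover have "AE x in M. cond_exp_c M F (\<lambda>x. 0) x = 0"
    using real_cond_exp_zero unfolding cond_exp_c_def by eventually_elim auto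
  ultimately show ?thesis by eventually_elim (auto simp: indicator_def)
qed

lemma obtain_positive_integrable_subalg:
  obtains \<rho> :: "'a \<Rightarrow> real"
  where "\<rho> \<in> borel_measurable F" "\<And>x. 0 < \<rho> x" "\<And>x. \<rho> x \<le> 1" "integrable M \<rho>"
proof -
  obtain \<rho> :: "'a \<Rightarrow> real" where \<rho>: "\<rho> \<in> borel_measurable (restr_to_subalg M F)"
    "\<And>x. 0 < \<rho> x" "\<And>x. \<rho> x \<le> 1" "integrable (restr_to_subalg M F) \<rho>"
    using sigma_finite_measure.obtain_positive_integrable_function[OF sigma_fin_subalg] by metis
  show ?thesis
    using that[of \<rho>] \<rho> measurable_in_subalg'[OF subalg \<rho>(1)] integrable_from_subalg[OF subalg \<rho>(4)]
    by auto
qed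

end

section \<open>Square integrable functions\<close>

lemma L2_norm_sq: "f \<in> L2 M \<Longrightarrow> (L2_norm M f)\<^sup>2 = (\<integral>x. (cmod (f x))\<^sup>2 \<partial>M)"
  unfolding L2_norm_def by (simp add: integral_nonneg_AE)

lemma L2_norm_nonneg: "0 \<le> L2_norm M f"
  by (simp add: L2_norm_def)

lemma nn_integral_L2:
  "f \<in> L2 M \<Longrightarrow> (\<integral>\<^sup>+x. ennreal ((cmod (f x))\<^sup>2) \<partial>M) = ennreal (\<integral>x. (cmod (f x))\<^sup>2 \<partial>M)"
  by (rule nn_integral_eq_integral) (auto simp: L2_def)

lemma L2_iff_nn_integral:
  "f \<in> L2 M \<longleftrightarrow> f \<in> borel_measurable M \<and> (\<integral>\<^sup>+x. ennreal ((cmod (f x))\<^sup>2) \<partial>M) < \<infinity>"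
  unfolding L2_def
  by (auto simp: integrable_iff_bounded nn_integral_L2 less_top[symmetric])

lemma L2_mono:
  assumes "f \<in> L2 M" "g \<in> borel_measurable M" "AE x in M. cmod (g x) \<le> cmod (f x)"
  shows "g \<in> L2 M"
  using assms unfolding L2_def
  by (auto intro!: Bochner_Integration.integrable_bound[where f="\<lambda>x. (cmod (f x))\<^sup>2"] power_mono
           elim!: eventually_mono)

lemma L2_add:
  assumes "f \<in> L2 M" "g \<in> L2 M"
  shows "(\<lambda>x. f x + g x) \<in> L2 M"
proof -
  have [measurable]: "f \<in> borel_measurable M" "g \<in> borel_measurable M" using assms by (auto simp: L2_def)
  have "integrable M (\<lambda>x. 2 * (cmod (f x))\<^sup>2 + 2 * (cmod (g x))\<^sup>2)"
    using assms by (auto simp: L2_def)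
  moreover have "norm ((cmod (f x + g x))\<^sup>2) \<le> norm (2 * (cmod (f x))\<^sup>2 + 2 * (cmod (g x))\<^sup>2)" for x
  proof -
    have "(cmod (f x + g x))\<^sup>2 \<le> (cmod (f x) + cmod (g x))\<^sup>2"
      by (rule power_mono[OF norm_triangle_ineq]) auto
    moreover have "0 \<le> (cmod (f x) - cmod (g x))\<^sup>2" by simp
    ultimately show ?thesis unfolding power2_sum power2_diff by simp
  qed
  ultimately show ?thesis unfolding L2_def
    by (auto intro: Bochner_Integration.integrable_bound[where f="\<lambda>x. 2 * (cmod (f x))\<^sup>2 + 2 * (cmod (g x))\<^sup>2"])
qed

lemma L2_cmult:
  assumes "f \<in> L2 M"
  shows "(\<lambda>x. c * f x) \<in> L2 M"
proof -
  have "integrable M (\<lambda>x. (cmod c)\<^sup>2 * (cmod (f x))\<^sup>2)" using assms by (auto simp: L2_def)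
  then show ?thesis using assms unfolding L2_def by (auto simp: norm_mult power_mult_distrib)
qed

lemma L2_spectrum_null_space:
  assumes "emeasure M (space M) = 0"
  shows "L2_spectrum M S = {}"
proof -
  have "AE x in M. False"
    using assms ae_filter_eq_bot_iff[of M] trivial_limit_def[of "ae_filter M"] by blast
  then have "AE x in M. P x" for P by (rule eventually_mono) simp
  then show ?thesis unfolding L2_spectrum_def by blast
qed

section \<open>Dyadic shells\<close>

definition dyadic_index :: "real \<Rightarrow> nat" where
  "dyadic_index s = (LEAST m. (1/2::real) ^ Suc m \<le> s)"

definition dyadic_shell :: "'a measure \<Rightarrow> ('a \<Rightarrow> real) \<Rightarrow> nat \<Rightarrow> 'a set" where
  "dyadic_shell N t m = {x \<in> space N. (1/2) ^ Suc m \<le> t x \<and> t x < (1/2) ^ m}"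

lemma dyadic_index_bounds:
  assumes "0 < s" "s < 1"
  shows "(1/2) ^ Suc (dyadic_index s) \<le> s" "s < (1/2) ^ dyadic_index s"
proof -
  obtain n where "(1/2::real) ^ n < s" using real_arch_pow_inv[OF assms(1), of "1/2"] by auto
  moreover have "(1/2::real) ^ Suc n \<le> (1/2) ^ n" by (rule power_decreasing) auto
  ultimately have "(1/2::real) ^ Suc n \<le> s" by linarith
  then show "(1/2) ^ Suc (dyadic_index s) \<le> s"
    unfolding dyadic_index_def by (rule LeastI)
  show "s < (1/2) ^ dyadic_index s"
  proof (cases "dyadic_index s")
    case (Suc j)
    then have "\<not> (1/2::real) ^ Suc j \<le> s"
      unfolding dyadic_index_def by (intro not_less_Least) simp
    then show ?thesis using Suc by simp
  qed (use assms in simp)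
qed

lemma dyadic_index_unique:
  assumes "(1/2) ^ Suc m \<le> s" "s < (1/2) ^ m"
  shows "dyadic_index s = m"
  unfolding dyadic_index_def
proof (rule Least_equality)
  fix n assume n: "(1/2::real) ^ Suc n \<le> s"
  show "m \<le> n"
  proof (rule ccontr)
    assume "\<not> m \<le> n"
    then have "(1/2::real) ^ m \<le> (1/2) ^ Suc n" by (intro power_decreasing) auto
    then show False using n assms(2) by simp
  qed
qed (use assms in simp)

lemma dyadic_index_ge:
  assumes "0 < s" "s < (1/2) ^ n"
  shows "n \<le> dyadic_index s"
proof (rule ccontr)
  have "(1/2::real) ^ n \<le> 1" by (simp add: power_le_one)
  then have "(1/2) ^ Suc (dyadic_index s) \<le> s" using assms by (intro dyadic_index_bounds) auto
  moreover assume "\<not> n \<le> dyadic_index s"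
  then have "(1/2::real) ^ n \<le> (1/2) ^ Suc (dyadic_index s)" by (intro power_decreasing) auto
  ultimately show False using assms(2) by simp
qed

lemma dyadic_index_sq_less:
  assumes "0 < s" "s < 1"
  shows "s\<^sup>2 * 4 ^ dyadic_index s < 1"
proof -
  have "s\<^sup>2 < ((1/2) ^ dyadic_index s)\<^sup>2"
    using assms dyadic_index_bounds[OF assms] by (intro power_strict_mono) auto
  moreover have "((1/2::real) ^ m)\<^sup>2 = 1 / 4 ^ m" for m
  proof -
    have "(2::real) ^ m * 2 ^ m = 4 ^ m" by (simp add: power_mult_distrib[symmetric])
    then show ?thesis by (simp add: power2_eq_square power_divide)
  qed
  ultimately show ?thesis by (simp add: less_divide_eq)
qed

lemma measurable_dyadic_index [measurable]:
  "f \<in> borel_measurable N \<Longrightarrow> (\<lambda>x. dyadic_index (f x)) \<in> measurable N (count_space UNIV)"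
  unfolding dyadic_index_def by measurable

lemma sets_dyadic_shell [measurable]:
  assumes "t \<in> borel_measurable N"
  shows "dyadic_shell N t m \<in> sets N"
proof -
  have "Measurable.pred borel (\<lambda>s::real. (1/2) ^ Suc m \<le> s \<and> s < (1/2) ^ m)" by measurable
  from measurable_compose[OF assms this] show ?thesis
    unfolding dyadic_shell_def by (simp add: pred_def)
qed

lemma mem_dyadic_shell_iff:
  "x \<in> dyadic_shell N t m \<longleftrightarrow> x \<in> space N \<and> 0 < t x \<and> t x < 1 \<and> dyadic_index (t x) = m"
proof
  assume x: "x \<in> dyadic_shell N t m"
  then have "dyadic_index (t x) = m" unfolding dyadic_shell_def by (intro dyadic_index_unique) auto
  moreover have "0 < (1/2::real) ^ Suc m" "(1/2::real) ^ m \<le> 1" by (auto simp: power_le_one)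
  ultimately show "x \<in> space N \<and> 0 < t x \<and> t x < 1 \<and> dyadic_index (t x) = m"
    using x unfolding dyadic_shell_def by auto
next
  assume "x \<in> space N \<and> 0 < t x \<and> t x < 1 \<and> dyadic_index (t x) = m"
  then show "x \<in> dyadic_shell N t m"
    using dyadic_index_bounds[of "t x"] unfolding dyadic_shell_def by auto
qed

lemma suminf_indicator_dyadic_shell:
  fixes c :: "nat \<Rightarrow> ennreal"
  shows "(\<Sum>m. indicator (dyadic_shell N t m) x * c m)
    = (if x \<in> space N \<and> 0 < t x \<and> t x < 1 then c (dyadic_index (t x)) else 0)"
proof -
  have "indicator (dyadic_shell N t m) x * c m = 0" if "m \<notin> {dyadic_index (t x)}" for m
    using that unfolding mem_dyadic_shell_iff indicator_def by simp
  then have "(\<Sum>m. indicator (dyadic_shell N t m) x * c m)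
           = (\<Sum>m\<in>{dyadic_index (t x)}. indicator (dyadic_shell N t m) x * c m)"
    by (intro suminf_finite) simp_all
  then show ?thesis unfolding mem_dyadic_shell_iff indicator_def by simp
qed

lemma nn_integral_dyadic_shells:
  fixes c :: "nat \<Rightarrow> ennreal"
  assumes [measurable]: "t \<in> borel_measurable N" "h \<in> borel_measurable N"
  shows "(\<integral>\<^sup>+x. (\<Sum>m. indicator (dyadic_shell N t m) x * c m) * h x \<partial>N)
       = (\<Sum>m. c m * (\<integral>\<^sup>+x \<in> dyadic_shell N t m. h x \<partial>N))"
proof -
  have "(\<integral>\<^sup>+x. (\<Sum>m. indicator (dyadic_shell N t m) x * c m) * h x \<partial>N)
      = (\<integral>\<^sup>+x. (\<Sum>m. c m * (h x * indicator (dyadic_shell N t m) x)) \<partial>N)"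
    by (intro nn_integral_cong, subst ennreal_suminf_multc[symmetric], rule suminf_cong) (simp add: mult_ac)
  also have "\<dots> = (\<Sum>m. \<integral>\<^sup>+x. c m * (h x * indicator (dyadic_shell N t m) x) \<partial>N)"
    by (rule nn_integral_suminf) measurable
  also have "\<dots> = (\<Sum>m. c m * (\<integral>\<^sup>+x \<in> dyadic_shell N t m. h x \<partial>N))"
    by (simp add: nn_integral_cmult)
  finally show ?thesis .
qed

definition dyadic_step :: "(nat \<Rightarrow> real) \<Rightarrow> real \<Rightarrow> real" where
  "dyadic_step a s = (if 0 < s \<and> s < 1 then a (dyadic_index s) else 0)"

lemma measurable_dyadic_step [measurable]: "dyadic_step a \<in> borel_measurable borel"
proof -
  have "(\<lambda>s. a (dyadic_index s)) \<in> borel_measurable borel"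
    by (rule measurable_compose[of _ _ "count_space UNIV"]) auto
  then show ?thesis unfolding dyadic_step_def by measurable
qed

lemma nn_integral_dyadic_step_sq:
  assumes [measurable]: "t \<in> borel_measurable N" "h \<in> borel_measurable N"
  shows "(\<integral>\<^sup>+x. ennreal ((dyadic_step a (t x))\<^sup>2) * h x \<partial>N)
       = (\<Sum>m. ennreal ((a m)\<^sup>2) * (\<integral>\<^sup>+x \<in> dyadic_shell N t m. h x \<partial>N))"
proof -
  have "(\<integral>\<^sup>+x. ennreal ((dyadic_step a (t x))\<^sup>2) * h x \<partial>N)
      = (\<integral>\<^sup>+x. (\<Sum>m. indicator (dyadic_shell N t m) x * ennreal ((a m)\<^sup>2)) * h x \<partial>N)"
    by (rule nn_integral_cong) (simp add: suminf_indicator_dyadic_shell dyadic_step_def)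
  then show ?thesis by (simp add: nn_integral_dyadic_shells)
qed

lemma nn_integral_dyadic_step_div_sq_ge:
  assumes [measurable]: "t \<in> borel_measurable N" "h \<in> borel_measurable N"
  shows "(\<Sum>m. ennreal ((a m)\<^sup>2 * 4 ^ m) * (\<integral>\<^sup>+x \<in> dyadic_shell N t m. h x \<partial>N))
       \<le> (\<integral>\<^sup>+x. ennreal ((dyadic_step a (t x) / t x)\<^sup>2) * h x \<partial>N)"
proof -
  have "(\<Sum>m. indicator (dyadic_shell N t m) x * ennreal ((a m)\<^sup>2 * 4 ^ m))
      \<le> ennreal ((dyadic_step a (t x) / t x)\<^sup>2)" for x
  proof (cases "x \<in> space N \<and> 0 < t x \<and> t x < 1")
    case True
    have "(a m)\<^sup>2 * 4 ^ m \<le> (a m / t x)\<^sup>2" if "m = dyadic_index (t x)" for m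
    proof -
      have "(t x)\<^sup>2 * 4 ^ m * (a m)\<^sup>2 \<le> 1 * (a m)\<^sup>2"
        using dyadic_index_sq_less[of "t x"] True that by (intro mult_right_mono) auto
      then show ?thesis using True by (simp add: power_divide field_simps)
    qed
    then show ?thesis
      using True by (simp add: suminf_indicator_dyadic_shell dyadic_step_def ennreal_leI)
  qed (auto simp: suminf_indicator_dyadic_shell)
  then show ?thesis
    by (subst nn_integral_dyadic_shells[symmetric]) (auto intro!: nn_integral_mono mult_right_mono)
qed

lemma suminf_indicator_eq_top:
  assumes "infinite {m::nat. P m}"
  shows "(\<Sum>m. (if P m then 1 else 0 :: ennreal)) = \<infinity>"
proof (rule ccontr)
  assume "(\<Sum>m. (if P m then 1 else 0 :: ennreal)) \<noteq> \<infinity>"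
  then have "summable (\<lambda>m. (if P m then 1 else 0 :: real))"
    by (intro summable_suminf_not_top) (auto simp: if_distrib cong: if_cong)
  then have "(\<lambda>m. (if P m then 1 else 0 :: real)) \<longlonglongrightarrow> 0" by (rule summable_LIMSEQ_zero)
  then have "eventually (\<lambda>m. dist (if P m then 1 else 0 :: real) 0 < 1/2) sequentially"
    by (rule tendstoD) simp
  then obtain n where "\<And>m. m \<ge> n \<Longrightarrow> \<not> P m"
    by (auto simp: eventually_sequentially split: if_splits)
  then have "{m. P m} \<subseteq> {..<n}" by (auto simp: not_le[symmetric])
  then show False using assms finite_subset by blast
qed

lemma infinite_nonnull_dyadic_shells:
  fixes t :: "'a \<Rightarrow> real" and h :: "'a \<Rightarrow> ennreal"
  assumes [measurable]: "t \<in> borel_measurable N" "h \<in> borel_measurable N"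
    and nonneg: "\<And>x. 0 \<le> t x" and nonzero: "AE x in N. t x \<noteq> 0"
    and near_zero: "\<And>e. 0 < e \<Longrightarrow> (\<integral>\<^sup>+x \<in> {x \<in> space N. t x < e}. h x \<partial>N) \<noteq> 0"
  shows "infinite {m. (\<integral>\<^sup>+x \<in> dyadic_shell N t m. h x \<partial>N) \<noteq> 0}"
proof
  assume "finite {m. (\<integral>\<^sup>+x \<in> dyadic_shell N t m. h x \<partial>N) \<noteq> 0}"
  then obtain n where null: "\<And>m. n \<le> m \<Longrightarrow> (\<integral>\<^sup>+x \<in> dyadic_shell N t m. h x \<partial>N) = 0"
    by (metis (mono_tags) finite_nat_set_iff_bounded_le mem_Collect_eq not_less_eq_eq)
  have "AE x in N. \<forall>m. x \<in> dyadic_shell N t (m + n) \<longrightarrow> h x = 0"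
    unfolding AE_all_countable
  proof
    fix m
    have "(\<integral>\<^sup>+x \<in> dyadic_shell N t (m + n). h x \<partial>N) = 0" by (rule null) simp
    then have "AE x in N. h x * indicator (dyadic_shell N t (m + n)) x = 0"
      by (subst (asm) nn_integral_0_iff_AE) simp_all
    then show "AE x in N. x \<in> dyadic_shell N t (m + n) \<longrightarrow> h x = 0"
      by eventually_elim (auto simp: indicator_def)
  qed
  then have "AE x in N. h x * indicator {x \<in> space N. t x < (1/2) ^ n} x = 0"
    using nonzero AE_space
  proof eventually_elim
    case (elim x)
    show ?case
    proof (cases "t x < (1/2) ^ n")
      case True
      have "(1/2::real) ^ n \<le> 1" by (simp add: power_le_one)
      with True elim nonneg[of x] have "0 < t x" "t x < 1" by auto
      with elim(3) have "x \<in> dyadic_shell N t (dyadic_index (t x))" by (simp add: mem_dyadic_shell_iff)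
      moreover obtain m where "dyadic_index (t x) = m + n"
        using dyadic_index_ge[OF \<open>0 < t x\<close> True] le_Suc_ex by (metis add.commute)
      ultimately show ?thesis using elim(1) by auto
    qed simp
  qed
  then have "(\<integral>\<^sup>+x \<in> {x \<in> space N. t x < (1/2) ^ n}. h x \<partial>N) = 0"
    by (subst nn_integral_0_iff_AE) auto
  then show False using near_zero[of "(1/2) ^ n"] by simp
qed

lemma ennreal_div_mult_cancel:
  "0 < v \<Longrightarrow> 0 \<le> c \<Longrightarrow> ennreal (c / v) * ennreal v = ennreal c"
  by (simp add: ennreal_mult[symmetric])

text \<open>Give \<open>g\<^sup>2 h\<close> mass \<open>4\<^sup>-\<^sup>m\<close> on the shell \<open>2\<^sup>-\<^sup>m\<^sup>-\<^sup>1 \<le> t < 2\<^sup>-\<^sup>m\<close>: dividing by \<open>t\<^sup>2\<close> multiplies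
  this by at least \<open>4\<^sup>m\<close>, and infinitely many shells are not null.\<close>
lemma exists_finite_nn_integral_div_infinite:
  fixes t :: "'a \<Rightarrow> real" and h :: "'a \<Rightarrow> ennreal"
  assumes [measurable]: "t \<in> borel_measurable N" "h \<in> borel_measurable N"
    and nonneg: "\<And>x. 0 \<le> t x" and finite: "(\<integral>\<^sup>+x. h x \<partial>N) < \<infinity>"
    and nonzero: "AE x in N. t x \<noteq> 0"
    and near_zero: "\<And>e. 0 < e \<Longrightarrow> (\<integral>\<^sup>+x \<in> {x \<in> space N. t x < e}. h x \<partial>N) \<noteq> 0"
  obtains g :: "real \<Rightarrow> real" where "g \<in> borel_measurable borel"
    "(\<integral>\<^sup>+x. ennreal ((g (t x))\<^sup>2) * h x \<partial>N) < \<infinity>"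
    "(\<integral>\<^sup>+x. ennreal ((g (t x) / t x)\<^sup>2) * h x \<partial>N) = \<infinity>"
proof
  define \<nu> where "\<nu> m = (\<integral>\<^sup>+x \<in> dyadic_shell N t m. h x \<partial>N)" for m
  \<comment> \<open>On null shells \<open>a m = 0\<close>, as \<open>enn2real 0 = 0\<close> and \<open>c / 0 = 0\<close>.\<close>
  define a where "a m = sqrt ((1/4) ^ m / enn2real (\<nu> m))" for m
  show "dyadic_step a \<in> borel_measurable borel" by simp
  have \<nu>_finite: "\<nu> m < \<infinity>" for m
    using finite unfolding \<nu>_def
    by (rule le_less_trans[rotated]) (auto intro!: nn_integral_mono simp: indicator_def)
  have a_sq: "ennreal ((a m)\<^sup>2 * c) * \<nu> m = (if \<nu> m = 0 then 0 else ennreal ((1/4) ^ m * c))"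
    if "0 \<le> c" for m and c :: real
  proof (cases "\<nu> m = 0")
    case False
    then obtain v where v: "\<nu> m = ennreal v" "0 < v"
      using \<nu>_finite[of m] by (cases "\<nu> m") (auto simp: ennreal_eq_0_iff)
    then have "ennreal ((a m)\<^sup>2 * c) * \<nu> m = ennreal ((1/4) ^ m * c / v) * ennreal v"
      using that by (simp add: a_def)
    then show ?thesis using v that False by (simp add: ennreal_div_mult_cancel)
  qed simp
  have "(\<integral>\<^sup>+x. ennreal ((dyadic_step a (t x))\<^sup>2) * h x \<partial>N) = (\<Sum>m. ennreal ((a m)\<^sup>2) * \<nu> m)"
    unfolding \<nu>_def by (rule nn_integral_dyadic_step_sq) fact+
  also have "\<dots> \<le> (\<Sum>m. ennreal ((1/4) ^ m))"
    by (intro suminf_le) (use a_sq[of 1] in auto)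
  also have "\<dots> < \<infinity>"
    by (simp add: ennreal_suminf_neq_top less_top[symmetric])
  finally show "(\<integral>\<^sup>+x. ennreal ((dyadic_step a (t x))\<^sup>2) * h x \<partial>N) < \<infinity>" .
  have "\<infinity> = (\<Sum>m. (if \<nu> m \<noteq> 0 then 1 else 0 :: ennreal))"
    unfolding \<nu>_def
    by (rule suminf_indicator_eq_top[symmetric]) (rule infinite_nonnull_dyadic_shells; fact)
  also have "\<dots> = (\<Sum>m. ennreal ((a m)\<^sup>2 * 4 ^ m) * \<nu> m)"
  proof (intro suminf_cong)
    fix m
    have "(1/4::real) ^ m * 4 ^ m = 1" by (simp add: power_mult_distrib[symmetric])
    then show "(if \<nu> m \<noteq> 0 then 1 else 0) = ennreal ((a m)\<^sup>2 * 4 ^ m) * \<nu> m" by (simp add: a_sq)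
  qed
  also have "\<dots> \<le> (\<integral>\<^sup>+x. ennreal ((dyadic_step a (t x) / t x)\<^sup>2) * h x \<partial>N)"
    unfolding \<nu>_def by (rule nn_integral_dyadic_step_div_sq_ge) fact+
  finally show "(\<integral>\<^sup>+x. ennreal ((dyadic_step a (t x) / t x)\<^sup>2) * h x \<partial>N) = \<infinity>"
    by (simp add: top_unique)
qed

section \<open>Points of the essential range\<close>

text \<open>Otherwise countably many null balls (Lindelof) would cover \<open>{r < |f|}\<close>.\<close>
lemma exists_ess_range_point_norm_gt:
  fixes f :: "'a \<Rightarrow> 'b::{real_normed_vector, second_countable_topology}"
  assumes [measurable]: "f \<in> borel_measurable M"
    and pos: "emeasure M {x \<in> space M. r < norm (f x)} \<noteq> 0"
  obtains l where "r < norm l" "\<And>e. 0 < e \<Longrightarrow> emeasure M {x \<in> space M. norm (f x - l) < e} \<noteq> 0"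
proof (rule ccontr)
  let ?U = "{l. r < norm l}"
  assume "\<not> thesis"
  then have "\<forall>l\<in>?U. \<exists>e>0. emeasure M {x \<in> space M. norm (f x - l) < e} = 0"
    using that by blast
  then obtain e where e: "\<And>l. l \<in> ?U \<Longrightarrow> 0 < e l \<and> emeasure M {x \<in> space M. norm (f x - l) < e l} = 0"
    by metis
  obtain \<F> where \<F>: "\<F> \<subseteq> (\<lambda>l. ball l (e l)) ` ?U" "countable \<F>" "\<Union>\<F> = (\<Union>l\<in>?U. ball l (e l))"
    by (rule Lindelof[of "(\<lambda>l. ball l (e l)) ` ?U"]) auto
  have "{x \<in> space M. f x \<in> S} \<in> null_sets M" if "S \<in> \<F>" for S
  proof -
    obtain l where "l \<in> ?U" "S = ball l (e l)" using \<F>(1) \<open>S \<in> \<F>\<close> by auto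
    moreover have "{x \<in> space M. f x \<in> ball l (e l)} = {x \<in> space M. norm (f x - l) < e l}"
      by (auto simp: dist_norm norm_minus_commute)
    ultimately show ?thesis using e by auto
  qed
  then have null: "(\<Union>S\<in>\<F>. {x \<in> space M. f x \<in> S}) \<in> null_sets M"
    by (rule null_sets_UN'[OF \<F>(2)])
  have cover: "{x \<in> space M. r < norm (f x)} \<subseteq> (\<Union>S\<in>\<F>. {x \<in> space M. f x \<in> S})"
  proof
    fix x assume "x \<in> {x \<in> space M. r < norm (f x)}"
    then have "f x \<in> \<Union>\<F>" unfolding \<F>(3) using e[of "f x"] by auto
    then show "x \<in> (\<Union>S\<in>\<F>. {x \<in> space M. f x \<in> S})" using \<open>x \<in> _\<close> by auto
  qed
  have "{x \<in> space M. r < norm (f x)} \<in> null_sets M"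
    by (rule null_sets_subset[OF null _ cover]) measurable
  then show False using pos by (simp add: null_sets_def)
qed

section \<open>The operator \<open>M\<^sub>w E M\<^sub>u\<close>\<close>

lemma SUP_mult_square_enn2real_eq_top:
  fixes c :: ennreal and V :: "nat \<Rightarrow> ennreal"
  assumes "0 < c" "\<And>n. V n \<noteq> \<infinity>" "(SUP n. V n) = \<infinity>"
  shows "(SUP n. c * ennreal ((enn2real (V n))\<^sup>2)) = \<infinity>"
proof -
  let ?S = "SUP n. c * ennreal ((enn2real (V n))\<^sup>2)"
  have ge: "c * ennreal (R\<^sup>2) \<le> ?S" if "0 \<le> R" for R :: real
  proof -
    have "ennreal R < (SUP n. V n)" unfolding assms(3) by simp
    then obtain n where n: "ennreal R < V n" by (auto simp: less_SUP_iff)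
    then have "R < enn2real (V n)" using assms(2)[of n] that
      by (metis enn2real_ennreal ennreal_enn2real_if ennreal_less_iff infinity_ennreal_def
                less_le_trans not_less order_refl top.not_eq_extremum)
    then have "c * ennreal (R\<^sup>2) \<le> c * ennreal ((enn2real (V n))\<^sup>2)"
      using that by (intro mult_left_mono ennreal_leI power_mono) auto
    also have "\<dots> \<le> ?S" by (rule SUP_upper) auto
    finally show ?thesis .
  qed
  show ?thesis
  proof (cases "c = \<infinity>")
    case True
    then show ?thesis using ge[of 1] by (simp add: top_unique)
  next
    case False
    then obtain c' where c': "c = ennreal c'" "0 < c'" using assms(1)
      by (cases c) (auto simp: ennreal_less_zero_iff)
    have nat_le: "ennreal (real m) \<le> ?S" for m :: nat
      using ge[of "sqrt (real m / c')"] c' by (simp add: ennreal_mult[symmetric])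
    show ?thesis
    proof (rule ccontr)
      assume "?S \<noteq> \<infinity>"
      then obtain s where s: "?S = ennreal s" "0 \<le> s" by (cases ?S) auto
      obtain m :: nat where "s < real m" using reals_Archimedean2 by blast
      then show False using nat_le[of m] s by (simp add: ennreal_le_iff)
    qed
  qed
qed

locale bounded_wce_op = sigma_finite_subalgebra +
  fixes u w :: "'a \<Rightarrow> complex" and C :: real
  assumes u_dom: "cond_exp_domain M F u" and w_dom: "cond_exp_domain M F w"
    and maps_L2: "\<And>f. f \<in> L2 M \<Longrightarrow> wce_op M F w u f \<in> L2 M"
    and norm_le: "\<And>f. f \<in> L2 M \<Longrightarrow> L2_norm M (wce_op M F w u f) \<le> C * L2_norm M f"
begin

abbreviation "T \<equiv> wce_op M F w u"

definition "W = nn_cond_exp M F (\<lambda>x. ennreal ((cmod (w x))\<^sup>2))"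

definition "\<phi> = cond_exp_c M F (\<lambda>x. u x * w x)"

lemma measurable_u_w [measurable]: "u \<in> borel_measurable M" "w \<in> borel_measurable M"
  using u_dom w_dom by (auto simp: cond_exp_domain_def)

lemma measurable_W [measurable]: "W \<in> borel_measurable F" "W \<in> borel_measurable M"
  unfolding W_def by auto

lemma measurable_phi [measurable]: "\<phi> \<in> borel_measurable F" "\<phi> \<in> borel_measurable M"
  unfolding \<phi>_def by auto

lemma measurable_T [measurable]: "T f \<in> borel_measurable M"
  unfolding wce_op_def by measurable

lemma integral_T_sq_le:
  assumes "f \<in> L2 M"
  shows "(\<integral>x. (cmod (T f x))\<^sup>2 \<partial>M) \<le> C\<^sup>2 * (\<integral>x. (cmod (f x))\<^sup>2 \<partial>M)"
proof -
  have "(L2_norm M (T f))\<^sup>2 \<le> (C * L2_norm M f)\<^sup>2"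
    by (rule power_mono[OF norm_le[OF assms]]) (simp add: L2_norm_nonneg)
  then show ?thesis using L2_norm_sq[OF assms] L2_norm_sq[OF maps_L2[OF assms]]
    by (simp add: power_mult_distrib)
qed

lemma nn_integral_w_mult:
  assumes [measurable]: "k \<in> borel_measurable F"
  shows "(\<integral>\<^sup>+x. ennreal ((cmod (w x * k x))\<^sup>2) \<partial>M) = (\<integral>\<^sup>+x. ennreal ((cmod (k x))\<^sup>2) * W x \<partial>M)"
proof -
  have "(\<integral>\<^sup>+x. ennreal ((cmod (w x * k x))\<^sup>2) \<partial>M)
      = (\<integral>\<^sup>+x. ennreal ((cmod (k x))\<^sup>2) * ennreal ((cmod (w x))\<^sup>2) \<partial>M)"
    by (auto intro!: nn_integral_cong simp: norm_mult power_mult_distrib ennreal_mult[symmetric] mult.commute)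
  also have "\<dots> = (\<integral>\<^sup>+x. ennreal ((cmod (k x))\<^sup>2) * W x \<partial>M)"
    unfolding W_def by (rule nn_cond_exp_intg[symmetric]) auto
  finally show ?thesis .
qed

lemma w_mult_in_L2:
  assumes [measurable]: "k \<in> borel_measurable F"
    and "(\<integral>\<^sup>+x. ennreal ((cmod (k x))\<^sup>2) * W x \<partial>M) < \<infinity>"
  shows "(\<lambda>x. w x * k x) \<in> L2 M"
  using assms borel_measurable_subalg[OF assms(1)] by (simp add: L2_iff_nn_integral nn_integral_w_mult)

text \<open>Testing \<open>T\<close> on \<open>f = a \<cdot> u\<^sup>*/|u|\<close> (\<open>0\<close> where \<open>u = 0\<close>), for which \<open>T f = w E(|u| a)\<close>.\<close>
lemma nn_integral_W_cond_exp_le: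
  fixes a :: "'a \<Rightarrow> real"
  assumes [measurable]: "a \<in> borel_measurable M" and nonneg: "\<And>x. 0 \<le> a x"
    and sq_int: "integrable M (\<lambda>x. (a x)\<^sup>2)"
  shows "(\<integral>\<^sup>+x. W x * ennreal ((enn2real (nn_cond_exp M F (\<lambda>x. ennreal (cmod (u x) * a x)) x))\<^sup>2) \<partial>M)
           \<le> ennreal (C\<^sup>2) * (\<integral>\<^sup>+x. ennreal ((a x)\<^sup>2) \<partial>M)"
proof -
  define V where "V = nn_cond_exp M F (\<lambda>x. ennreal (cmod (u x) * a x))"
  have [measurable]: "V \<in> borel_measurable F" unfolding V_def by auto
  define f where "f x = cnj (u x) / complex_of_real (cmod (u x)) * complex_of_real (a x)" for x
  have [measurable]: "f \<in> borel_measurable M" unfolding f_def by measurable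
  have uf: "u x * f x = complex_of_real (cmod (u x) * a x)" for x
  proof (cases "u x = 0")
    case False
    have "u x * cnj (u x) = complex_of_real ((cmod (u x))\<^sup>2)" by (rule complex_norm_square[symmetric])
    then show ?thesis using False unfolding f_def by (simp add: field_simps power2_eq_square)
  qed (simp add: f_def)
  have norm_f: "cmod (f x) \<le> a x" for x
    unfolding f_def using nonneg by (auto simp: norm_mult norm_divide)
  have "integrable M (\<lambda>x. (cmod (f x))\<^sup>2)"
    by (rule Bochner_Integration.integrable_bound[OF sq_int]) (auto intro!: power_mono norm_f)
  then have f_L2: "f \<in> L2 M" by (simp add: L2_def)
  have Tf: "AE x in M. T f x = w x * complex_of_real (enn2real (V x))"
  proof -
    have "AE x in M. cond_exp_c M F (\<lambda>x. complex_of_real (cmod (u x) * a x)) x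
                   = complex_of_real (enn2real (V x))"
      unfolding V_def by (rule cond_exp_c_of_real_nonneg) (auto simp: nonneg)
    then show ?thesis unfolding wce_op_def uf by eventually_elim simp
  qed
  have "(\<integral>\<^sup>+x. W x * ennreal ((enn2real (V x))\<^sup>2) \<partial>M)
      = (\<integral>\<^sup>+x. ennreal ((enn2real (V x))\<^sup>2) * ennreal ((cmod (w x))\<^sup>2) \<partial>M)"
    unfolding W_def by (subst mult.commute, rule nn_cond_exp_intg) auto
  also have "\<dots> = (\<integral>\<^sup>+x. ennreal ((cmod (T f x))\<^sup>2) \<partial>M)"
    by (rule nn_integral_cong_AE)
       (use Tf in \<open>eventually_elim, auto simp: norm_mult ennreal_mult[symmetric] power_mult_distrib\<close>)
  also have "\<dots> = ennreal (\<integral>x. (cmod (T f x))\<^sup>2 \<partial>M)" by (rule nn_integral_L2[OF maps_L2[OF f_L2]])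
  also have "\<dots> \<le> ennreal (C\<^sup>2 * (\<integral>x. (cmod (f x))\<^sup>2 \<partial>M))"
    by (rule ennreal_leI) (rule integral_T_sq_le[OF f_L2])
  also have "\<dots> \<le> ennreal (C\<^sup>2 * (\<integral>x. (a x)\<^sup>2 \<partial>M))"
    using f_L2 by (intro ennreal_leI mult_left_mono integral_mono sq_int)
                  (auto intro!: power_mono norm_f simp: L2_def)
  also have "\<dots> = ennreal (C\<^sup>2) * (\<integral>\<^sup>+x. ennreal ((a x)\<^sup>2) \<partial>M)"
    by (subst nn_integral_eq_integral) (auto simp: sq_int ennreal_mult integral_nonneg_AE)
  finally show ?thesis unfolding V_def .
qed

text \<open>Over truncations \<open>a'\<close> of \<open>a\<close> the integrals of \<open>W (E(|u| a'))\<^sup>2\<close> stay bounded, which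
  is impossible where \<open>W > 0\<close> and \<open>E(|u| a) = \<infinity>\<close>.\<close>
lemma cond_exp_finite_on_W_pos:
  fixes a :: "'a \<Rightarrow> real"
  assumes [measurable]: "a \<in> borel_measurable M" and nonneg: "\<And>x. 0 \<le> a x"
    and sq_int: "integrable M (\<lambda>x. (a x)\<^sup>2)"
  shows "AE x in M. 0 < W x \<longrightarrow> nn_cond_exp M F (\<lambda>x. ennreal (cmod (u x) * a x)) x \<noteq> \<infinity>"
proof -
  obtain a' where [measurable]: "\<And>n. a' n \<in> borel_measurable M"
    and a': "\<And>n x. 0 \<le> a' n x" "\<And>n x. a' n x \<le> a x"
    and V: "AE x in M. \<forall>n. nn_cond_exp M F (\<lambda>x. ennreal (cmod (u x) * a' n x)) x \<noteq> \<infinity>"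
      "AE x in M. incseq (\<lambda>n. nn_cond_exp M F (\<lambda>x. ennreal (cmod (u x) * a' n x)) x)"
      "AE x in M. nn_cond_exp M F (\<lambda>x. ennreal (cmod (u x) * a x)) x
                = (SUP n. nn_cond_exp M F (\<lambda>x. ennreal (cmod (u x) * a' n x)) x)"
    using nn_cond_exp_truncation[of "\<lambda>x. cmod (u x)" a] nonneg by auto
  define V where "V n = nn_cond_exp M F (\<lambda>x. ennreal (cmod (u x) * a' n x))" for n
  have [measurable]: "V n \<in> borel_measurable M" for n unfolding V_def by measurable
  have "AE x in M. \<forall>n. V n x \<le> V (Suc n) x \<and> V (Suc n) x \<noteq> \<infinity>"
    using V(1,2) unfolding V_def[symmetric] by eventually_elim (auto simp: incseq_Suc_iff)
  then have "(\<integral>\<^sup>+x. (SUP n. W x * ennreal ((enn2real (V n x))\<^sup>2)) \<partial>M)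
           = (SUP n. \<integral>\<^sup>+x. W x * ennreal ((enn2real (V n x))\<^sup>2) \<partial>M)"
    by (intro nn_integral_monotone_convergence_SUP_AE)
       (auto elim!: eventually_mono intro!: mult_left_mono ennreal_leI power_mono enn2real_mono
             simp: less_top)
  also have "\<dots> \<le> ennreal (C\<^sup>2) * (\<integral>\<^sup>+x. ennreal ((a x)\<^sup>2) \<partial>M)"
  proof (rule SUP_least)
    fix n
    have "integrable M (\<lambda>x. (a' n x)\<^sup>2)"
      by (rule Bochner_Integration.integrable_bound[OF sq_int]) (auto intro!: power_mono a')
    then have "(\<integral>\<^sup>+x. W x * ennreal ((enn2real (V n x))\<^sup>2) \<partial>M)
             \<le> ennreal (C\<^sup>2) * (\<integral>\<^sup>+x. ennreal ((a' n x)\<^sup>2) \<partial>M)"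
      unfolding V_def by (intro nn_integral_W_cond_exp_le) (auto intro: a')
    also have "\<dots> \<le> ennreal (C\<^sup>2) * (\<integral>\<^sup>+x. ennreal ((a x)\<^sup>2) \<partial>M)"
      by (intro mult_left_mono nn_integral_mono ennreal_leI power_mono a') auto
    finally show "(\<integral>\<^sup>+x. W x * ennreal ((enn2real (V n x))\<^sup>2) \<partial>M) \<le> \<dots>" .
  qed
  also have "\<dots> < \<infinity>"
    using sq_int by (simp add: nn_integral_eq_integral ennreal_mult_less_top)
  finally have "AE x in M. (SUP n. W x * ennreal ((enn2real (V n x))\<^sup>2)) \<noteq> \<infinity>"
    by (intro nn_integral_PInf_AE) auto
  then show ?thesis using V(1,3) unfolding V_def[symmetric]
  proof eventually_elim
    case (elim x)
    show ?case
    proof (intro impI notI)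
      assume "0 < W x" "nn_cond_exp M F (\<lambda>x. ennreal (cmod (u x) * a x)) x = \<infinity>"
      then have "(SUP n. W x * ennreal ((enn2real (V n x))\<^sup>2)) = \<infinity>"
        using elim(2,3) by (intro SUP_mult_square_enn2real_eq_top) auto
      then show False using elim(1) by simp
    qed
  qed
qed

lemma W_eq_0_imp: "AE x in M. W x = 0 \<longrightarrow> w x = 0"
  using nn_cond_exp_eq_0_imp[of "\<lambda>x. ennreal ((cmod (w x))\<^sup>2)"] unfolding W_def
  by (auto elim!: eventually_mono)

text \<open>Test \<open>T\<close> against \<open>a = \<rho>\<close>, for which \<open>E(|u| \<rho>) = \<rho> E|u|\<close> is finite; where \<open>W = \<infinity>\<close>
  this forces \<open>E(|u| \<rho>) = 0\<close>.\<close>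
lemma W_eq_top_imp: "AE x in M. W x = \<infinity> \<longrightarrow> u x = 0"
proof -
  obtain \<rho> :: "'a \<Rightarrow> real" where [measurable]: "\<rho> \<in> borel_measurable F"
    and \<rho>: "\<And>x. 0 < \<rho> x" "\<And>x. \<rho> x \<le> 1" "integrable M \<rho>"
    using obtain_positive_integrable_subalg by metis
  have [measurable]: "\<rho> \<in> borel_measurable M" by (rule borel_measurable_subalg) fact
  have sq_int: "integrable M (\<lambda>x. (\<rho> x)\<^sup>2)"
    by (rule Bochner_Integration.integrable_bound[OF \<rho>(3)])
       (use \<rho> in \<open>auto simp: power2_eq_square abs_of_pos intro!: mult_left_le_one_le less_imp_le\<close>)
  let ?V = "nn_cond_exp M F (\<lambda>x. ennreal (cmod (u x) * \<rho> x))"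
  have "(\<lambda>x. ennreal (cmod (u x) * \<rho> x)) = (\<lambda>x. ennreal (\<rho> x) * ennreal (cmod (u x)))"
    using \<rho>(1) by (auto simp: ennreal_mult[symmetric] less_imp_le mult.commute)
  then have finite: "AE x in M. ?V x \<noteq> \<infinity>"
    using nn_cond_exp_finite_mult[of "\<lambda>x. ennreal (\<rho> x)" "\<lambda>x. ennreal (cmod (u x))"] u_dom
    by (simp add: cond_exp_domain_def)
  have "(\<integral>\<^sup>+x. W x * ennreal ((enn2real (?V x))\<^sup>2) \<partial>M) \<le> ennreal (C\<^sup>2) * (\<integral>\<^sup>+x. ennreal ((\<rho> x)\<^sup>2) \<partial>M)"
    by (rule nn_integral_W_cond_exp_le) (use \<rho> sq_int in \<open>auto intro: less_imp_le\<close>)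
  also have "\<dots> < \<infinity>" using sq_int by (simp add: nn_integral_eq_integral ennreal_mult_less_top)
  finally have "AE x in M. W x * ennreal ((enn2real (?V x))\<^sup>2) \<noteq> \<infinity>"
    by (intro nn_integral_PInf_AE) auto
  moreover have "AE x in M. ?V x = 0 \<longrightarrow> ennreal (cmod (u x) * \<rho> x) = 0"
    by (rule nn_cond_exp_eq_0_imp) simp
  ultimately show ?thesis using finite
  proof eventually_elim
    case (elim x)
    show ?case
    proof
      assume "W x = \<infinity>"
      then have "?V x = 0" using elim(1,3) by (auto simp: ennreal_mult_eq_top_iff enn2real_eq_0_iff)
      then have "cmod (u x) * \<rho> x \<le> 0" using elim(2) by (simp add: ennreal_eq_0_iff)
      then show "u x = 0" using \<rho>(1)[of x] by (simp add: mult_le_0_iff)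
    qed
  qed
qed

text \<open>Take \<open>c = (\<rho> / (1 + W))\<^sup>1\<^sup>/\<^sup>2\<close> with \<open>\<rho>\<close> integrable, so that \<open>c\<^sup>2 W \<le> \<rho>\<close>.\<close>
lemma obtain_L2_weight:
  obtains c :: "'a \<Rightarrow> real" where "c \<in> borel_measurable F" "\<And>x. 0 \<le> c x"
    "\<And>x. W x \<noteq> \<infinity> \<Longrightarrow> 0 < c x" "(\<integral>\<^sup>+x. ennreal ((c x)\<^sup>2) * W x \<partial>M) < \<infinity>"
proof -
  obtain \<rho> :: "'a \<Rightarrow> real" where [measurable]: "\<rho> \<in> borel_measurable F"
    and \<rho>: "\<And>x. 0 < \<rho> x" "\<And>x. \<rho> x \<le> 1" "integrable M \<rho>"
    using obtain_positive_integrable_subalg by metis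
  have [measurable]: "\<rho> \<in> borel_measurable M" by (rule borel_measurable_subalg) fact
  define c where "c x = (if W x = \<infinity> then 0 else sqrt (\<rho> x / (1 + enn2real (W x))))" for x
  have pos: "0 < c x" if "W x \<noteq> \<infinity>" for x
    using that \<rho>(1)[of x] by (simp add: c_def add_pos_nonneg)
  then have nonneg: "0 \<le> c x" for x by (cases "W x = \<infinity>") (auto simp: c_def less_imp_le)
  have "ennreal ((c x)\<^sup>2) * W x \<le> ennreal (\<rho> x)" for x
  proof (cases "W x = \<infinity>")
    case False
    then obtain s where s: "W x = ennreal s" "0 \<le> s" by (cases "W x") auto
    have "(c x)\<^sup>2 = \<rho> x / (1 + s)"
      using False \<rho>(1)[of x] s by (simp add: c_def less_imp_le)
    moreover have "\<rho> x / (1 + s) * s \<le> \<rho> x"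
      using s \<rho>(1)[of x] by (simp add: field_simps)
    ultimately show ?thesis
      using s \<rho>(1)[of x] by (simp add: ennreal_mult[symmetric] less_imp_le ennreal_leI)
  qed (simp add: c_def)
  then have "(\<integral>\<^sup>+x. ennreal ((c x)\<^sup>2) * W x \<partial>M) \<le> (\<integral>\<^sup>+x. ennreal (\<rho> x) \<partial>M)"
    by (rule nn_integral_mono)
  also have "\<dots> < \<infinity>" using \<rho> by (simp add: nn_integral_eq_integral less_imp_le)
  finally have "(\<integral>\<^sup>+x. ennreal ((c x)\<^sup>2) * W x \<partial>M) < \<infinity>" .
  moreover have "c \<in> borel_measurable F" unfolding c_def by measurable
  ultimately show ?thesis using that pos nonneg by blast
qed

text \<open>Where \<open>0 < W < \<infinity>\<close> apply \<open>cond_exp_finite_on_W_pos\<close> to \<open>a = |w| c\<close>; elsewhere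
  \<open>u w = 0\<close> a.e.\<close>
lemma cond_exp_domain_uw: "cond_exp_domain M F (\<lambda>x. u x * w x)"
proof -
  obtain c where [measurable]: "c \<in> borel_measurable F" and c: "\<And>x. 0 \<le> c x"
    "\<And>x. W x \<noteq> \<infinity> \<Longrightarrow> 0 < c x" "(\<integral>\<^sup>+x. ennreal ((c x)\<^sup>2) * W x \<partial>M) < \<infinity>"
    using obtain_L2_weight by metis
  have [measurable]: "c \<in> borel_measurable M" by (rule borel_measurable_subalg) fact
  have "(\<lambda>x. w x * complex_of_real (c x)) \<in> L2 M"
    using c(3) by (intro w_mult_in_L2) auto
  then have "AE x in M. 0 < W x \<longrightarrow> nn_cond_exp M F (\<lambda>x. ennreal (cmod (u x) * (cmod (w x) * c x))) x \<noteq> \<infinity>"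
    using c(1) by (intro cond_exp_finite_on_W_pos) (auto simp: L2_def norm_mult)
  moreover have "AE x in M. ennreal (c x) * nn_cond_exp M F (\<lambda>x. ennreal (cmod (u x * w x))) x
      = nn_cond_exp M F (\<lambda>x. ennreal (cmod (u x) * (cmod (w x) * c x))) x"
  proof -
    have "(\<lambda>x. ennreal (c x) * ennreal (cmod (u x * w x)))
        = (\<lambda>x. ennreal (cmod (u x) * (cmod (w x) * c x)))"
      using c(1) by (auto simp: ennreal_mult[symmetric] norm_mult mult_ac)
    moreover have "AE x in M. ennreal (c x) * nn_cond_exp M F (\<lambda>x. ennreal (cmod (u x * w x))) x
      = nn_cond_exp M F (\<lambda>x. ennreal (c x) * ennreal (cmod (u x * w x))) x"
      by (rule nn_cond_exp_prod) auto
    ultimately show ?thesis by simp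
  qed
  moreover have "AE x in M. x \<in> {x \<in> space M. W x = 0 \<or> W x = \<infinity>}
                   \<longrightarrow> nn_cond_exp M F (\<lambda>x. ennreal (cmod (u x * w x))) x = 0"
  proof (rule nn_cond_exp_eq_0_on)
    show "{x \<in> space M. W x = 0 \<or> W x = \<infinity>} \<in> sets F" by (rule pred_sets_subalg) auto
    show "AE x in M. x \<in> {x \<in> space M. W x = 0 \<or> W x = \<infinity>} \<longrightarrow> ennreal (cmod (u x * w x)) = 0"
      using W_eq_0_imp W_eq_top_imp by eventually_elim auto
  qed simp
  ultimately have "AE x in M. nn_cond_exp M F (\<lambda>x. ennreal (cmod (u x * w x))) x \<noteq> \<infinity>"
    using AE_space
  proof eventually_elim
    case (elim x)
    then show ?case
      using c(2)[of x] by (cases "W x = 0 \<or> W x = \<infinity>") (auto simp: ennreal_mult_eq_top_iff zero_less_iff_neq_zero)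
  qed
  then show ?thesis by (simp add: cond_exp_domain_def)
qed

definition "W_pos = {x \<in> space M. 0 < W x}"

text \<open>Since \<open>w = 0\<close> a.e. where \<open>W = 0\<close>, only \<open>u\<close> on \<open>W_pos\<close> matters for \<open>T\<close>; there
  \<open>E(u g)\<close> exists for every \<open>g \<in> L\<^sup>2\<close>, which makes \<open>T\<close> linear.\<close>
definition "u_W x = indicator W_pos x * u x"

lemma sets_W_pos [measurable]: "W_pos \<in> sets F" "W_pos \<in> sets M"
proof -
  show "W_pos \<in> sets F" unfolding W_pos_def by (rule pred_sets_subalg) auto
  then show "W_pos \<in> sets M" by (rule sets_subalg)
qed

lemma measurable_u_W [measurable]: "u_W \<in> borel_measurable M"
  unfolding u_W_def by measurable

lemma cond_exp_domain_u_W_mult: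
  assumes "g \<in> L2 M"
  shows "cond_exp_domain M F (\<lambda>x. u_W x * g x)"
proof -
  have [measurable]: "g \<in> borel_measurable M" using assms by (simp add: L2_def)
  have "AE x in M. indicator W_pos x * nn_cond_exp M F (\<lambda>x. ennreal (cmod (u x) * cmod (g x))) x
      = nn_cond_exp M F (\<lambda>x. indicator W_pos x * ennreal (cmod (u x) * cmod (g x))) x"
    by (rule nn_cond_exp_prod) auto
  moreover have "AE x in M. 0 < W x \<longrightarrow> nn_cond_exp M F (\<lambda>x. ennreal (cmod (u x) * cmod (g x))) x \<noteq> \<infinity>"
    using assms by (intro cond_exp_finite_on_W_pos) (auto simp: L2_def)
  ultimately have "AE x in M. nn_cond_exp M F (\<lambda>x. indicator W_pos x * ennreal (cmod (u x) * cmod (g x))) x \<noteq> \<infinity>"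
    using AE_space
  proof eventually_elim
    case (elim x)
    then show ?case by (cases "x \<in> W_pos") (auto simp: W_pos_def)
  qed
  moreover have "(\<lambda>x. indicator W_pos x * ennreal (cmod (u x) * cmod (g x))) = (\<lambda>x. ennreal (cmod (u_W x * g x)))"
    by (auto simp: u_W_def indicator_def norm_mult)
  ultimately show ?thesis by (simp add: cond_exp_domain_def)
qed

lemma T_eq_u_W:
  assumes [measurable]: "g \<in> borel_measurable M"
  shows "AE x in M. T g x = w x * cond_exp_c M F (\<lambda>x. u_W x * g x) x"
proof -
  have "(\<lambda>x. u_W x * g x) = (\<lambda>x. indicator W_pos x * (u x * g x))"
    by (auto simp: u_W_def)
  moreover have "AE x in M. cond_exp_c M F (\<lambda>x. indicator W_pos x * (u x * g x)) x
                 = indicator W_pos x * cond_exp_c M F (\<lambda>x. u x * g x) x"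
    by (rule cond_exp_c_indicator) auto
  ultimately have "AE x in M. cond_exp_c M F (\<lambda>x. u_W x * g x) x
                 = indicator W_pos x * cond_exp_c M F (\<lambda>x. u x * g x) x"
    by simp
  then show ?thesis using W_eq_0_imp AE_space unfolding wce_op_def
  proof eventually_elim
    case (elim x)
    then show ?case by (cases "x \<in> W_pos") (auto simp: W_pos_def)
  qed
qed

lemma T_add:
  assumes "f \<in> L2 M" "g \<in> L2 M"
  shows "AE x in M. T (\<lambda>x. f x + g x) x = T f x + T g x"
proof -
  have [measurable]: "f \<in> borel_measurable M" "g \<in> borel_measurable M" using assms by (auto simp: L2_def)
  have "AE x in M. cond_exp_c M F (\<lambda>x. u_W x * f x + u_W x * g x) x
                 = cond_exp_c M F (\<lambda>x. u_W x * f x) x + cond_exp_c M F (\<lambda>x. u_W x * g x) x"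
    using assms by (intro cond_exp_c_add cond_exp_domain_u_W_mult)
  moreover have "AE x in M. T (\<lambda>x. f x + g x) x = w x * cond_exp_c M F (\<lambda>x. u_W x * f x + u_W x * g x) x"
    unfolding distrib_left[symmetric] by (rule T_eq_u_W) auto
  ultimately show ?thesis using T_eq_u_W[OF \<open>f \<in> borel_measurable M\<close>] T_eq_u_W[OF \<open>g \<in> borel_measurable M\<close>]
    by eventually_elim (simp add: distrib_left)
qed

lemma T_cmult:
  assumes "f \<in> L2 M"
  shows "AE x in M. T (\<lambda>x. c * f x) x = c * T f x"
proof -
  have [measurable]: "f \<in> borel_measurable M" using assms by (simp add: L2_def)
  have "AE x in M. cond_exp_c M F (\<lambda>x. c * (u_W x * f x)) x = c * cond_exp_c M F (\<lambda>x. u_W x * f x) x"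
    using assms by (intro cond_exp_c_mult cond_exp_domain_u_W_mult) auto
  moreover have "AE x in M. T (\<lambda>x. c * f x) x = w x * cond_exp_c M F (\<lambda>x. c * (u_W x * f x)) x"
    unfolding mult.left_commute[of c] by (rule T_eq_u_W) auto
  ultimately show ?thesis using T_eq_u_W[OF \<open>f \<in> borel_measurable M\<close>]
    by eventually_elim (simp add: mult.left_commute)
qed

lemma T_w_mult:
  assumes [measurable]: "k \<in> borel_measurable F"
  shows "AE x in M. T (\<lambda>x. w x * k x) x = w x * k x * \<phi> x"
proof -
  have "AE x in M. cond_exp_c M F (\<lambda>x. k x * (u x * w x)) x = k x * \<phi> x"
    unfolding \<phi>_def by (rule cond_exp_c_mult) (auto intro: cond_exp_domain_uw)
  then show ?thesis unfolding wce_op_def by eventually_elim (simp add: mult_ac)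
qed

lemma T_cong:
  assumes [measurable]: "f \<in> borel_measurable M" "g \<in> borel_measurable M" and "AE x in M. f x = g x"
  shows "AE x in M. T f x = T g x"
proof -
  have "AE x in M. cond_exp_c M F (\<lambda>x. u x * f x) x = cond_exp_c M F (\<lambda>x. u x * g x) x"
    by (rule cond_exp_c_cong) (use assms(3) in auto)
  then show ?thesis unfolding wce_op_def by eventually_elim simp
qed

lemma phi_neq_0_imp: "AE x in M. \<phi> x \<noteq> 0 \<longrightarrow> 0 < W x \<and> W x \<noteq> \<infinity>"
proof -
  have "AE x in M. x \<in> {x \<in> space M. W x = 0 \<or> W x = \<infinity>} \<longrightarrow> \<phi> x = 0"
    unfolding \<phi>_def
  proof (rule cond_exp_c_eq_0_on)
    show "{x \<in> space M. W x = 0 \<or> W x = \<infinity>} \<in> sets F" by (rule pred_sets_subalg) auto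
    show "AE x in M. x \<in> {x \<in> space M. W x = 0 \<or> W x = \<infinity>} \<longrightarrow> u x * w x = 0"
      using W_eq_0_imp W_eq_top_imp by eventually_elim auto
  qed simp
  then show ?thesis using AE_space by eventually_elim (auto simp: zero_less_iff_neq_zero)
qed

text \<open>Every solution of \<open>(T - l) f = w k\<close> with \<open>k\<close> \<open>F\<close>-measurable is of the form \<open>w m\<close>,
  on which \<open>T\<close> acts as multiplication by \<open>\<phi>\<close>.\<close>
lemma resolvent_equation:
  assumes "l \<noteq> 0" and [measurable]: "f \<in> borel_measurable M" "k \<in> borel_measurable F"
    and eq: "AE x in M. T f x - l * f x = w x * k x"
  shows "AE x in M. f x * (\<phi> x - l) = w x * k x"
proof -
  define m where "m x = (cond_exp_c M F (\<lambda>x. u_W x * f x) x - k x) / l" for x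
  have [measurable]: "m \<in> borel_measurable F" "m \<in> borel_measurable M"
    unfolding m_def by (auto intro: borel_measurable_subalg)
  have f_eq: "AE x in M. f x = w x * m x"
    using T_eq_u_W[OF \<open>f \<in> borel_measurable M\<close>] eq by eventually_elim (use \<open>l \<noteq> 0\<close> in \<open>auto simp: m_def field_simps\<close>)
  have "AE x in M. T f x = T (\<lambda>x. w x * m x) x" by (rule T_cong) (use f_eq in auto)
  then show ?thesis using T_w_mult[OF \<open>m \<in> borel_measurable F\<close>] f_eq eq
    by eventually_elim (simp add: algebra_simps)
qed

lemma T_minus_injective:
  assumes "l \<noteq> 0" "AE x in M. \<phi> x \<noteq> l" "f \<in> L2 M" "AE x in M. T f x - l * f x = 0"
  shows "AE x in M. f x = 0"
  using resolvent_equation[of l f "\<lambda>_. 0"] assms(2) assms(1,3,4) by (auto simp: L2_def elim: AE_mp)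

lemma T_minus_surjective:
  assumes "l \<noteq> 0" "0 < \<delta>" and dist: "AE x in M. \<delta> \<le> cmod (\<phi> x - l)" and "g \<in> L2 M"
  shows "\<exists>f\<in>L2 M. AE x in M. T f x - l * f x = g x"
proof -
  have [measurable]: "g \<in> borel_measurable M" using assms by (simp add: L2_def)
  define k where "k x = cond_exp_c M F (\<lambda>x. u_W x * g x) x / (\<phi> x - l)" for x
  have [measurable]: "k \<in> borel_measurable F" "k \<in> borel_measurable M"
    unfolding k_def by (auto intro: borel_measurable_subalg)
  have Tg: "AE x in M. w x * k x * (\<phi> x - l) = T g x"
    using T_eq_u_W[OF \<open>g \<in> borel_measurable M\<close>] dist by eventually_elim (use \<open>0 < \<delta>\<close> in \<open>auto simp: k_def\<close>)
  have wk_L2: "(\<lambda>x. w x * k x) \<in> L2 M"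
  proof (rule L2_mono)
    show "(\<lambda>x. (1 / \<delta>) * T g x) \<in> L2 M" using assms maps_L2 by (intro L2_cmult) auto
    show "AE x in M. cmod (w x * k x) \<le> cmod ((1 / \<delta>) * T g x)"
      using Tg dist
    proof eventually_elim
      case (elim x)
      then have "cmod (T g x) = cmod (w x * k x) * cmod (\<phi> x - l)" by (metis norm_mult)
      then have "cmod (w x * k x) * \<delta> \<le> cmod (T g x)"
        using elim(2) by (simp add: mult_left_mono)
      then show ?case using \<open>0 < \<delta>\<close> by (simp add: norm_mult norm_divide field_simps)
    qed
  qed simp
  have g'_L2: "(\<lambda>x. (-1) * g x) \<in> L2 M" using assms(4) by (rule L2_cmult)
  have sum_L2: "(\<lambda>x. w x * k x + (-1) * g x) \<in> L2 M" using wk_L2 g'_L2 by (rule L2_add)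
  define f where "f x = (1 / l) * (w x * k x + (-1) * g x)" for x
  have f_L2: "f \<in> L2 M" unfolding f_def using sum_L2 by (rule L2_cmult)
  have "AE x in M. T f x = (1 / l) * (T (\<lambda>x. w x * k x) x + (-1) * T g x)"
    using T_cmult[OF sum_L2, of "1 / l"] T_add[OF wk_L2 g'_L2] T_cmult[OF assms(4), of "-1"]
    unfolding f_def by eventually_elim simp
  then have "AE x in M. T f x - l * f x = g x"
    using T_w_mult[OF \<open>k \<in> borel_measurable F\<close>] Tg
    by eventually_elim (use \<open>l \<noteq> 0\<close> in \<open>simp add: f_def field_simps\<close>)
  then show ?thesis using f_L2 by blast
qed

lemma not_in_L2_spectrum:
  assumes "l \<noteq> 0" "0 < \<delta>" "AE x in M. \<delta> \<le> cmod (\<phi> x - l)"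
  shows "l \<notin> L2_spectrum M T"
proof -
  have "AE x in M. \<phi> x \<noteq> l" using assms(3) by eventually_elim (use assms(2) in auto)
  then show ?thesis
    using T_minus_surjective[OF assms] T_minus_injective[OF assms(1)] by (auto simp: L2_spectrum_def)
qed

lemma zero_in_L2_spectrum:
  assumes "AE x in M. \<phi> x = 0" and "emeasure M (space M) \<noteq> 0"
  shows "0 \<in> L2_spectrum M T"
proof (rule ccontr)
  assume "0 \<notin> L2_spectrum M T"
  then have inj: "\<And>f. f \<in> L2 M \<Longrightarrow> AE x in M. T f x = 0 \<Longrightarrow> AE x in M. f x = 0"
    by (auto simp: L2_spectrum_def)
  have T_zero: "AE x in M. T f x = 0" if "f \<in> L2 M" for f
  proof -
    have [measurable]: "f \<in> borel_measurable M" using that by (simp add: L2_def)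
    define k where "k = cond_exp_c M F (\<lambda>x. u_W x * f x)"
    have [measurable]: "k \<in> borel_measurable F" "k \<in> borel_measurable M"
      unfolding k_def by (auto intro: borel_measurable_subalg)
    have "AE x in M. T (T f) x = T (\<lambda>x. w x * k x) x"
      by (rule T_cong) (use T_eq_u_W[OF \<open>f \<in> borel_measurable M\<close>] in \<open>auto simp: k_def\<close>)
    then have "AE x in M. T (T f) x = 0" using T_w_mult[OF \<open>k \<in> borel_measurable F\<close>] assms(1) by eventually_elim simp
    then show ?thesis by (rule inj[OF maps_L2[OF that]])
  qed
  obtain \<rho> :: "'a \<Rightarrow> real" where [measurable]: "\<rho> \<in> borel_measurable F"
    and \<rho>: "\<And>x. 0 < \<rho> x" "\<And>x. \<rho> x \<le> 1" "integrable M \<rho>"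
    using obtain_positive_integrable_subalg by metis
  have [measurable]: "\<rho> \<in> borel_measurable M" by (rule borel_measurable_subalg) fact
  have "integrable M (\<lambda>x. (cmod (complex_of_real (\<rho> x)))\<^sup>2)"
    by (rule Bochner_Integration.integrable_bound[OF \<rho>(3)])
       (use \<rho> in \<open>auto simp: power2_eq_square abs_of_pos intro!: mult_left_le_one_le less_imp_le\<close>)
  then have "(\<lambda>x. complex_of_real (\<rho> x)) \<in> L2 M" by (simp add: L2_def)
  then have "AE x in M. complex_of_real (\<rho> x) = 0" using inj T_zero by blast
  then have "AE x in M. False" using \<rho>(1) by (auto elim!: eventually_mono simp: less_le)
  then show False
    using assms(2) ae_filter_eq_bot_iff[of M] trivial_limit_def[of "ae_filter M"] by blast
qed

lemma eigenvalue_in_L2_spectrum: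
  assumes "l \<noteq> 0" and pos: "emeasure M {x \<in> space M. \<phi> x = l} \<noteq> 0"
  shows "l \<in> L2_spectrum M T"
proof (rule ccontr)
  assume "l \<notin> L2_spectrum M T"
  then have inj: "\<And>f. f \<in> L2 M \<Longrightarrow> AE x in M. T f x - l * f x = 0 \<Longrightarrow> AE x in M. f x = 0"
    by (auto simp: L2_spectrum_def)
  obtain c where [measurable]: "c \<in> borel_measurable F" and c: "\<And>x. 0 \<le> c x"
    "\<And>x. W x \<noteq> \<infinity> \<Longrightarrow> 0 < c x" "(\<integral>\<^sup>+x. ennreal ((c x)\<^sup>2) * W x \<partial>M) < \<infinity>"
    using obtain_L2_weight by metis
  define B where "B = {x \<in> space M. \<phi> x = l}"
  have [measurable]: "B \<in> sets F"
    unfolding B_def by (rule pred_sets_subalg[where P="\<lambda>z. z = l"]) auto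
  then have [measurable]: "B \<in> sets M" by (rule sets_subalg)
  define k where "k x = complex_of_real (indicator B x * c x)" for x
  have [measurable]: "k \<in> borel_measurable F" "k \<in> borel_measurable M"
    unfolding k_def by (auto intro: borel_measurable_subalg)
  have "(\<integral>\<^sup>+x. ennreal ((cmod (k x))\<^sup>2) * W x \<partial>M) \<le> (\<integral>\<^sup>+x. ennreal ((c x)\<^sup>2) * W x \<partial>M)"
    using c(1) by (intro nn_integral_mono mult_right_mono ennreal_leI) (auto simp: k_def indicator_def)
  then have wk_L2: "(\<lambda>x. w x * k x) \<in> L2 M"
    using c(3) by (intro w_mult_in_L2) auto
  have "AE x in M. T (\<lambda>x. w x * k x) x - l * (w x * k x) = 0"
    using T_w_mult[OF \<open>k \<in> borel_measurable F\<close>] by eventually_elim (auto simp: k_def B_def indicator_def)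
  then have "AE x in M. w x * k x = 0" by (rule inj[OF wk_L2])
  then have "(\<integral>\<^sup>+x. ennreal ((cmod (k x))\<^sup>2) * W x \<partial>M) = 0"
    unfolding nn_integral_w_mult[symmetric, OF \<open>k \<in> borel_measurable F\<close>]
    by (auto intro!: nn_integral_0_iff_AE[THEN iffD2] elim!: eventually_mono)
  then have "AE x in M. ennreal ((cmod (k x))\<^sup>2) * W x = 0"
    by (subst (asm) nn_integral_0_iff_AE) (auto intro: borel_measurable_subalg)
  then have "AE x in M. x \<notin> B" using phi_neq_0_imp
  proof eventually_elim
    case (elim x)
    show ?case
    proof
      assume "x \<in> B"
      then have "0 < W x" "W x \<noteq> \<infinity>" using elim(2) \<open>l \<noteq> 0\<close> by (auto simp: B_def)
      then show False using elim(1) c(2)[of x] \<open>x \<in> B\<close> by (auto simp: k_def)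
    qed
  qed
  then show False using pos by (subst (asm) AE_iff_measurable[OF _ refl]) (auto simp: B_def)
qed

lemma T_minus_not_surjective:
  assumes "l \<noteq> 0" "AE x in M. \<phi> x \<noteq> l" and [measurable]: "k \<in> borel_measurable F"
    and wk_L2: "(\<lambda>x. w x * k x) \<in> L2 M"
    and not_L2: "(\<integral>\<^sup>+x. ennreal ((cmod (k x / (\<phi> x - l)))\<^sup>2) * W x \<partial>M) = \<infinity>"
  shows "l \<in> L2_spectrum M T"
proof (rule ccontr)
  assume "l \<notin> L2_spectrum M T"
  then obtain f where f: "f \<in> L2 M" "AE x in M. T f x - l * f x = w x * k x"
    using wk_L2 by (auto simp: L2_spectrum_def)
  then have "AE x in M. f x * (\<phi> x - l) = w x * k x"
    by (intro resolvent_equation \<open>l \<noteq> 0\<close>) (auto simp: L2_def)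
  then have "AE x in M. f x = w x * (k x / (\<phi> x - l))"
    using assms(2) by eventually_elim (auto simp: field_simps)
  then have "(\<integral>\<^sup>+x. ennreal ((cmod (f x))\<^sup>2) \<partial>M) = (\<integral>\<^sup>+x. ennreal ((cmod (k x / (\<phi> x - l)))\<^sup>2) * W x \<partial>M)"
    by (subst nn_integral_w_mult[symmetric]) (auto intro!: nn_integral_cong_AE elim!: eventually_mono)
  then show False using f(1) not_L2 by (simp add: L2_iff_nn_integral)
qed

lemma nn_integral_weight_near_essential_value:
  assumes "l \<noteq> 0" "0 < e" and [measurable]: "c \<in> borel_measurable F"
    and c_pos: "\<And>x. W x \<noteq> \<infinity> \<Longrightarrow> 0 < c x"
    and ess: "\<And>e. 0 < e \<Longrightarrow> emeasure M {x \<in> space M. cmod (\<phi> x - l) < e} \<noteq> 0"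
  shows "(\<integral>\<^sup>+x \<in> {x \<in> space M. cmod (\<phi> x - l) < e}. ennreal ((c x)\<^sup>2) * W x \<partial>M) \<noteq> 0"
proof
  have [measurable]: "c \<in> borel_measurable M" by (rule borel_measurable_subalg) fact
  assume "(\<integral>\<^sup>+x \<in> {x \<in> space M. cmod (\<phi> x - l) < e}. ennreal ((c x)\<^sup>2) * W x \<partial>M) = 0"
  then have "AE x in M. ennreal ((c x)\<^sup>2) * W x * indicator {x \<in> space M. cmod (\<phi> x - l) < e} x = 0"
    by (subst (asm) nn_integral_0_iff_AE) auto
  then have "AE x in M. \<not> cmod (\<phi> x - l) < min e (cmod l)"
    using phi_neq_0_imp AE_space
  proof eventually_elim
    case (elim x)
    show ?case
    proof
      assume "cmod (\<phi> x - l) < min e (cmod l)"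
      then have "\<phi> x \<noteq> 0" "x \<in> {x \<in> space M. cmod (\<phi> x - l) < e}" using elim(3) by auto
      then show False using elim(1,2) c_pos[of x] by (auto simp: zero_less_iff_neq_zero)
    qed
  qed
  then have "emeasure M {x \<in> space M. cmod (\<phi> x - l) < min e (cmod l)} = 0"
    by (subst (asm) AE_iff_measurable[OF _ refl]) auto
  then show False using ess[of "min e (cmod l)"] assms(1,2) by simp
qed

text \<open>If \<open>l\<close> is an essential value of \<open>\<phi>\<close> but not an eigenvalue, pick \<open>g\<close> as in
  \<open>exists_finite_nn_integral_div_infinite\<close> for \<open>t = |\<phi> - l|\<close> and the finite measure
  \<open>c\<^sup>2 W d\<mu>\<close>: then \<open>w c g(t) \<in> L\<^sup>2\<close>, but its only preimage under \<open>T - l\<close> would be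
  \<open>w c g(t) / (\<phi> - l) \<notin> L\<^sup>2\<close>.\<close>
lemma essential_value_in_L2_spectrum:
  assumes "l \<noteq> 0" and ess: "\<And>e. 0 < e \<Longrightarrow> emeasure M {x \<in> space M. cmod (\<phi> x - l) < e} \<noteq> 0"
  shows "l \<in> L2_spectrum M T"
proof (cases "emeasure M {x \<in> space M. \<phi> x = l} = 0")
  case False
  then show ?thesis using eigenvalue_in_L2_spectrum[OF \<open>l \<noteq> 0\<close>] by blast
next
  case True
  then have not_l: "AE x in M. \<phi> x \<noteq> l" by (subst AE_iff_measurable[OF _ refl]) auto
  obtain c where [measurable]: "c \<in> borel_measurable F" and c: "\<And>x. 0 \<le> c x"
    "\<And>x. W x \<noteq> \<infinity> \<Longrightarrow> 0 < c x" "(\<integral>\<^sup>+x. ennreal ((c x)\<^sup>2) * W x \<partial>M) < \<infinity>"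
    using obtain_L2_weight by metis
  define t where "t x = cmod (\<phi> x - l)" for x
  define h where "h x = ennreal ((c x)\<^sup>2) * W x" for x
  have [measurable]: "t \<in> borel_measurable F" "t \<in> borel_measurable M" "h \<in> borel_measurable M"
    unfolding t_def h_def by (auto intro: borel_measurable_subalg)
  obtain g :: "real \<Rightarrow> real" where [measurable]: "g \<in> borel_measurable borel"
    and g: "(\<integral>\<^sup>+x. ennreal ((g (t x))\<^sup>2) * h x \<partial>M) < \<infinity>"
           "(\<integral>\<^sup>+x. ennreal ((g (t x) / t x)\<^sup>2) * h x \<partial>M) = \<infinity>"
  proof (rule exists_finite_nn_integral_div_infinite[of t M h])
    show "AE x in M. t x \<noteq> 0" using not_l by eventually_elim (simp add: t_def)
    show "(\<integral>\<^sup>+x \<in> {x \<in> space M. t x < e}. h x \<partial>M) \<noteq> 0" if "0 < e" for e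
      using nn_integral_weight_near_essential_value[OF \<open>l \<noteq> 0\<close> that _ c(2) ess]
      unfolding t_def h_def by simp
  qed (use c(3) in \<open>auto simp: t_def h_def\<close>)
  define k where "k x = complex_of_real (c x * g (t x))" for x
  have [measurable]: "k \<in> borel_measurable F" unfolding k_def by measurable
  have weighted: "ennreal ((cmod (k x * s))\<^sup>2) * W x = ennreal ((g (t x) * cmod s)\<^sup>2) * h x" for x s
    using c(1)[of x] by (simp add: k_def h_def norm_mult power_mult_distrib ennreal_mult mult_ac)
  show ?thesis
  proof (rule T_minus_not_surjective[OF \<open>l \<noteq> 0\<close> not_l])
    show "(\<lambda>x. w x * k x) \<in> L2 M" using g(1) weighted[of _ 1] by (intro w_mult_in_L2) auto
    show "(\<integral>\<^sup>+x. ennreal ((cmod (k x / (\<phi> x - l)))\<^sup>2) * W x \<partial>M) = \<infinity>"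
      using g(2) weighted[of _ "1 / (\<phi> _ - l)"] by (simp add: t_def norm_divide)
  qed simp
qed

lemma exists_L2_spectrum_norm_gt:
  assumes "0 \<le> r" "emeasure M {x \<in> space M. r < cmod (\<phi> x)} \<noteq> 0"
  obtains l where "l \<in> L2_spectrum M T" "r < cmod l"
proof -
  obtain l where "r < cmod l" "\<And>e. 0 < e \<Longrightarrow> emeasure M {x \<in> space M. cmod (\<phi> x - l) < e} \<noteq> 0"
    using exists_ess_range_point_norm_gt[of \<phi> M r] assms(2) by auto
  moreover have "l \<noteq> 0" using \<open>r < cmod l\<close> \<open>0 \<le> r\<close> by auto
  ultimately show ?thesis using essential_value_in_L2_spectrum that by blast
qed

lemma esssup_nonneg:
  assumes "emeasure M (space M) \<noteq> 0"
  shows "0 \<le> esssup M (\<lambda>x. ereal (cmod (\<phi> x)))"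
proof -
  have "esssup M (\<lambda>x. 0 :: ereal) \<le> esssup M (\<lambda>x. ereal (cmod (\<phi> x)))"
    by (rule esssup_mono) auto
  then show ?thesis using esssup_const[OF assms, of "0 :: ereal"] by simp
qed

lemma norm_le_esssup_if_in_L2_spectrum:
  assumes "emeasure M (space M) \<noteq> 0" "l \<in> L2_spectrum M T"
  shows "ereal (cmod l) \<le> esssup M (\<lambda>x. ereal (cmod (\<phi> x)))"
proof (rule ccontr)
  let ?E = "esssup M (\<lambda>x. ereal (cmod (\<phi> x)))"
  assume "\<not> ereal (cmod l) \<le> ?E"
  moreover have "0 \<le> ?E" using assms(1) by (rule esssup_nonneg)
  ultimately obtain e where e: "?E = ereal e" "0 \<le> e" "e < cmod l" by (cases ?E) auto
  have "AE x in M. cmod l - e \<le> cmod (\<phi> x - l)"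
    using esssup_AE[of "\<lambda>x. ereal (cmod (\<phi> x))" M]
  proof eventually_elim
    case (elim x)
    then have "cmod (\<phi> x) \<le> e" using e(1) by simp
    moreover have "cmod l \<le> cmod (\<phi> x) + cmod (\<phi> x - l)"
      using norm_triangle_ineq4[of "\<phi> x" "\<phi> x - l"] by simp
    ultimately show ?case by linarith
  qed
  then have "l \<notin> L2_spectrum M T" using e by (intro not_in_L2_spectrum) auto
  then show False using assms(2) by simp
qed

lemma esssup_le_L2_spectral_radius:
  assumes "emeasure M (space M) \<noteq> 0"
  shows "esssup M (\<lambda>x. ereal (cmod (\<phi> x))) \<le> L2_spectral_radius M T"
proof -
  let ?E = "esssup M (\<lambda>x. ereal (cmod (\<phi> x)))" and ?R = "L2_spectral_radius M T"
  have le_R: "ereal (cmod l) \<le> ?R" if "l \<in> L2_spectrum M T" for l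
    unfolding L2_spectral_radius_def using that by (rule SUP_upper)
  show ?thesis
  proof (cases "?E = 0")
    case True
    have "AE x in M. \<phi> x = 0"
      using esssup_AE[of "\<lambda>x. ereal (cmod (\<phi> x))" M] by eventually_elim (simp add: True)
    then have "0 \<in> L2_spectrum M T" using assms by (rule zero_in_L2_spectrum)
    then show ?thesis using True le_R[of 0] by (simp add: zero_ereal_def)
  next
    case False
    then have "0 < ?E" using esssup_nonneg[OF assms] by simp
    show ?thesis
    proof (rule ccontr)
      assume "\<not> ?E \<le> ?R"
      then have "?R < ?E" by simp
      then obtain z where z: "?R < z" "z < ?E" using dense by blast
      then have "z \<noteq> \<infinity>" "z \<noteq> -\<infinity>" by auto
      then obtain r where r: "z = ereal r" by (cases z) auto
      have "ereal (max 0 r) < ?E"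
        using z(2) \<open>0 < ?E\<close> unfolding r by (cases "0 \<le> r") (auto simp: max_def zero_ereal_def)
      then have "0 < emeasure M {x \<in> space M. ereal (max 0 r) < ereal (cmod (\<phi> x))}"
        by (intro esssup_pos_measure) auto
      then have "emeasure M {x \<in> space M. max 0 r < cmod (\<phi> x)} \<noteq> 0" by simp
      then obtain l where l: "l \<in> L2_spectrum M T" "max 0 r < cmod l"
        using exists_L2_spectrum_norm_gt[of "max 0 r"] by auto
      have "ereal (cmod l) < ereal r" using le_R[OF l(1)] z(1) unfolding r by (rule le_less_trans)
      then show False using l(2) by simp
    qed
  qed
qed

lemma L2_spectral_radius_eq_esssup:
  "L2_spectral_radius M T = esssup M (\<lambda>x. ereal (cmod (\<phi> x)))"
proof (cases "emeasure M (space M) = 0")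
  case True
  then show ?thesis
    by (simp add: L2_spectral_radius_def L2_spectrum_null_space esssup_zero_space bot_ereal_def)
next
  case False
  then show ?thesis
    using norm_le_esssup_if_in_L2_spectrum esssup_le_L2_spectral_radius
    by (auto simp: L2_spectral_radius_def intro!: antisym SUP_least)
qed

end

theorem theorem3p3:
  fixes M F :: "'a measure" and u w :: "'a \<Rightarrow> complex"
  assumes "complete_measure M"
    and "sigma_finite_measure M"
    and "sigma_finite_subalgebra M F"
    and "cond_exp_domain M F u" and "cond_exp_domain M F w"
    and "bounded_on_L2 M (wce_op M F w u)"
  shows "L2_spectral_radius M (wce_op M F w u)
           = esssup M (\<lambda>x. ereal (cmod (cond_exp_c M F (\<lambda>y. u y * w y) x)))"
proof -
  obtain C where "\<And>f. f \<in> L2 M \<Longrightarrow> wce_op M F w u f \<in> L2 M"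
    "\<And>f. f \<in> L2 M \<Longrightarrow> L2_norm M (wce_op M F w u f) \<le> C * L2_norm M f"
    using assms(6) unfolding bounded_on_L2_def by blast
  with assms(3-5) interpret bounded_wce_op M F u w C
    by (intro bounded_wce_op.intro bounded_wce_op_axioms.intro)
  show ?thesis using L2_spectral_radius_eq_esssup unfolding \<phi>_def .
qed

end
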